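(* Let $1<p_0<p<\infty$, $p'=p/(p-1)$, let $w\in\mathcal{A}_p$, and let $h\in\ell^{p'}(w)$ be a positive sequence. Let $\mathcal{M}'h:=\mathcal{M}(wh)/w$ and $$\mathcal{N}'h(n):=\sum_{s=0}^{\infty}\frac{(\mathcal{M}')^s h(n)}{2^s\|\mathcal{M}'\|_{\ell^{p'}(w)}^s},$$ where $(\mathcal{M}')^0h=h$, $(\mathcal{M}')^s$ is the $s$-fold iterate and $\|\mathcal{M}'\|_{\ell^{p'}(w)}$ is the (finite) operator norm of $\mathcal{M}'$ on $\ell^{p'}(w)$. Then $w(\mathcal{N}'h)^{\frac{p-p_0}{p-1}}\in\mathcal{A}_{p_0}$ and $$\Big[w(\mathcal{N}'h)^{\frac{p-p_0}{p-1}}\Big]_{\mathcal{A}_{p_0}}\le\big[(\mathcal{N}'h)w\big]_{\mathcal{A}_1}^{\frac{p-p_0}{p-1}}[w]_{\mathcal{A}_p}^{\frac{p_0-1}{p-1}}.$$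
   Context: Throughout, a weight is a sequence $w=\{w(k)\}_{k\ge 1}$ of strictly positive real numbers indexed by $\mathbb{Z}_+=\{1,2,\dots\}$. For $1\le q<\infty$ and a weight $v$, $\ell^q(v)$ is the space of real sequences $f$ with $\|f\|_{\ell^q(v)}=\big(\sum_{k\ge1}v(k)|f(k)|^q\big)^{1/q}<\infty$. The discrete Hardy–Littlewood maximal operator is $\mathcal{M}f(k)=\sup_{n\ge k}\frac1n\sum_{j=1}^n|f(j)|$, $k\in\mathbb{Z}_+$. For $1<q<\infty$, a weight $w$ belongs to $\mathcal{A}_q$ iff $[w]_{\mathcal{A}_q}:=\sup_{n\ge1}\big(\frac1n\sum_{k=1}^n w(k)\big)\big(\frac1n\sum_{k=1}^n w(k)^{-1/(q-1)}\big)^{q-1}<\infty$. A weight $w$ belongs to $\mathcal{A}_1$ iff there is $C$ with $\mathcal{M}w(k)\le C\,w(k)$ for all $k$; $[w]_{\mathcal{A}_1}$ is the infimum of such $C$. The operator norm of an operator $S$ on $\ell^q(v)$ is $\sup\{\|Sf\|_{\ell^q(v)}:\|f\|_{\ell^q(v)}\le1\}$. *)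

theory Defs
  imports "HOL-Analysis.Analysis"
begin

text \<open>Sequences are functions nat => real; only the indices k >= 1 matter
  (the index set is Z_+ = {1,2,...}); the value at 0 is ignored everywhere.\<close>

definition weight :: "(nat \<Rightarrow> real) \<Rightarrow> bool" where
  "weight w \<longleftrightarrow> (\<forall>k\<ge>1. w k > 0)"

definition avg :: "(nat \<Rightarrow> real) \<Rightarrow> nat \<Rightarrow> real" where
  "avg f n = (\<Sum>j=1..n. f j) / real n"

definition maxop :: "(nat \<Rightarrow> real) \<Rightarrow> nat \<Rightarrow> real" where
  "maxop f k = (SUP n\<in>{max 1 k..}. avg (\<lambda>j. \<bar>f j\<bar>) n)"

definition in_lq :: "(nat \<Rightarrow> real) \<Rightarrow> real \<Rightarrow> (nat \<Rightarrow> real) \<Rightarrow> bool" where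
  "in_lq v q f \<longleftrightarrow> summable (\<lambda>k. v (Suc k) * \<bar>f (Suc k)\<bar> powr q)"

definition lq_norm :: "(nat \<Rightarrow> real) \<Rightarrow> real \<Rightarrow> (nat \<Rightarrow> real) \<Rightarrow> real" where
  "lq_norm v q f = (\<Sum>k. v (Suc k) * \<bar>f (Suc k)\<bar> powr q) powr (1 / q)"

definition op_norm :: "((nat \<Rightarrow> real) \<Rightarrow> (nat \<Rightarrow> real)) \<Rightarrow> (nat \<Rightarrow> real) \<Rightarrow> real \<Rightarrow> real" where
  "op_norm S v q = Sup {lq_norm v q (S f) | f. in_lq v q f \<and> lq_norm v q f \<le> 1}"

definition Ap_char :: "real \<Rightarrow> (nat \<Rightarrow> real) \<Rightarrow> nat \<Rightarrow> real" where
  "Ap_char q w n = avg w n * (avg (\<lambda>k. w k powr (-1 / (q - 1))) n) powr (q - 1)"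

definition in_Ap :: "real \<Rightarrow> (nat \<Rightarrow> real) \<Rightarrow> bool" where
  "in_Ap q w \<longleftrightarrow> bdd_above (Ap_char q w ` {1..})"

definition Ap_const :: "real \<Rightarrow> (nat \<Rightarrow> real) \<Rightarrow> real" where
  "Ap_const q w = (SUP n\<in>{1..}. Ap_char q w n)"

text \<open>A_1: M w(k) <= C w(k) for all k, i.e. (unfolding the sup) every average
  (1/n) sum_{j<=n} w j with n >= k is <= C w(k).\<close>
definition A1_bounds :: "(nat \<Rightarrow> real) \<Rightarrow> real set" where
  "A1_bounds w = {C. \<forall>k\<ge>1. \<forall>n\<ge>k. avg (\<lambda>j. \<bar>w j\<bar>) n \<le> C * w k}"

definition in_A1 :: "(nat \<Rightarrow> real) \<Rightarrow> bool" where
  "in_A1 w \<longleftrightarrow> A1_bounds w \<noteq> {}"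

definition A1_const :: "(nat \<Rightarrow> real) \<Rightarrow> real" where
  "A1_const w = Inf (A1_bounds w)"

definition Mprime :: "(nat \<Rightarrow> real) \<Rightarrow> (nat \<Rightarrow> real) \<Rightarrow> (nat \<Rightarrow> real)" where
  "Mprime w h = (\<lambda>k. maxop (\<lambda>j. w j * h j) k / w k)"

definition Nprime :: "real \<Rightarrow> (nat \<Rightarrow> real) \<Rightarrow> (nat \<Rightarrow> real) \<Rightarrow> (nat \<Rightarrow> real)" where
  "Nprime p w h = (\<lambda>n. \<Sum>s. (Mprime w ^^ s) h n /
      (2 ^ s * op_norm (Mprime w) w (p / (p - 1)) ^ s))"

end

(* Writing a = (p - p0)/(p - 1), the weight w N'^a factors as w^(1 - a) (N' w)^a, and
   Hoelder's inequality on each initial segment {1..n} bounds its A_p0 characteristic by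
   [N' w]_A1^a [w]_Ap^(1 - a).  That N' w is an A_1 weight is the Rubio de Francia
   construction: M' (N' h) <= 2 |M'| N' h, which needs M' to be bounded on l^p'(w).
   Since M' h = M (w h) / w, this is the boundedness of the one-sided maximal operator M on
   l^p'(sigma), sigma = w^(-1/(p-1)).  It follows from Hoelder's inequality with the weights
   sigma T^((p'-1)/2) and w T^(-1/2), T the partial sums of w, together with the geometric
   growth of T along dyadic scales that the A_p condition forces. *)

theory Submission
  imports Defs
begin

lemma powr_mult_le_convex_comb:
  fixes x y t :: real
  assumes "0 \<le> x" "0 \<le> y" "0 < t" "t < 1"
  shows "x powr t * y powr (1 - t) \<le> t * x + (1 - t) * y"
proof (cases "x = 0 \<or> y = 0")
  case True then show ?thesis using assms by auto
next
  case False then show ?thesis using assms Youngs_inequality_0[of t "1-t" x y] by auto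
qed

lemma Holder_inequality_sum:
  fixes X Y :: "'a \<Rightarrow> real" and t :: real
  assumes "finite A" "\<And>j. j \<in> A \<Longrightarrow> 0 \<le> X j" "\<And>j. j \<in> A \<Longrightarrow> 0 \<le> Y j" "0 < t" "t < 1"
  shows "(\<Sum>j\<in>A. X j powr t * Y j powr (1 - t)) \<le> (\<Sum>j\<in>A. X j) powr t * (\<Sum>j\<in>A. Y j) powr (1 - t)"
proof -
  define SX where "SX = (\<Sum>j\<in>A. X j)"
  define SY where "SY = (\<Sum>j\<in>A. Y j)"
  have SX0: "SX \<ge> 0" "SY \<ge> 0" unfolding SX_def SY_def using assms by (auto intro: sum_nonneg)
  show ?thesis
  proof (cases "SX = 0 \<or> SY = 0")
    case True
    then have "\<forall>j\<in>A. X j = 0 \<or> Y j = 0"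
      using assms sum_nonneg_eq_0_iff unfolding SX_def SY_def by blast
    then have "(\<Sum>j\<in>A. X j powr t * Y j powr (1 - t)) = 0" by (intro sum.neutral) auto
    then show ?thesis using SX0 unfolding SX_def[symmetric] SY_def[symmetric] by simp
  next
    case False
    then have pos: "SX > 0" "SY > 0" using SX0 by auto
    have "(\<Sum>j\<in>A. X j powr t * Y j powr (1 - t))
        = (\<Sum>j\<in>A. SX powr t * SY powr (1 - t) * ((X j / SX) powr t * (Y j / SY) powr (1 - t)))"
      using pos assms by (intro sum.cong) (auto simp: powr_divide)
    also have "\<dots> \<le> (\<Sum>j\<in>A. SX powr t * SY powr (1 - t) * (t * (X j / SX) + (1 - t) * (Y j / SY)))"
      using pos assms by (intro sum_mono mult_left_mono powr_mult_le_convex_comb) auto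
    also have "\<dots> = SX powr t * SY powr (1 - t) * (t * (\<Sum>j\<in>A. X j) / SX + (1 - t) * (\<Sum>j\<in>A. Y j) / SY)"
      by (simp add: sum_distrib_left sum.distrib sum_divide_distrib[symmetric] algebra_simps)
    also have "\<dots> = SX powr t * SY powr (1 - t)"
      using pos unfolding SX_def[symmetric] SY_def[symmetric] by simp
    finally show ?thesis unfolding SX_def SY_def .
  qed
qed

lemma powr_le_of_le_Holder_bound:
  fixes a b c q :: real
  assumes "0 \<le> a" "0 \<le> b" "0 \<le> c" "0 < q" "a \<le> b powr (1/q) * c powr (1 - 1/q)"
  shows "a powr q \<le> b * c powr (q - 1)"
proof -
  have "a powr q \<le> (b powr (1/q) * c powr (1 - 1/q)) powr q"
    using assms by (intro powr_mono2) auto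
  also have "\<dots> = b powr (1/q * q) * c powr ((1 - 1/q) * q)"
    using assms by (simp add: powr_mult powr_powr)
  finally have "a powr q \<le> b powr (1/q * q) * c powr ((1 - 1/q) * q)" .
  moreover have "(1 - 1/q) * q = q - 1" "1/q * q = 1" using assms by (auto simp: field_simps)
  ultimately show ?thesis using assms by simp
qed

lemma le_powr_inverse_of_powr_le:
  fixes x y q :: real
  assumes "0 \<le> x" "x powr q \<le> y" "0 < q"
  shows "x \<le> y powr (1/q)"
proof -
  have "x = (x powr q) powr (1/q)" using assms by (simp add: powr_powr)
  also have "\<dots> \<le> y powr (1/q)" using assms by (intro powr_mono2) auto
  finally show ?thesis .
qed

lemma powr_inverse_powr: "0 \<le> x \<Longrightarrow> r \<noteq> 0 \<Longrightarrow> (x powr (1/r)) powr r = x"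
  for x r :: real
  by (simp add: powr_powr)

lemma powr_powr_inverse: "0 \<le> x \<Longrightarrow> r \<noteq> 0 \<Longrightarrow> (x powr r) powr (1/r) = x"
  for x r :: real
  by (simp add: powr_powr)

text \<open>The tangent line of the concave function \<open>x powr (1 - e)\<close> at \<open>b\<close> lies above its graph.\<close>
lemma powr_diff_ge_tangent:
  fixes a b e :: real
  assumes "0 \<le> a" "a \<le> b" "0 < b" "0 < e" "e < 1"
  shows "(1 - e) * b powr (-e) * (b - a) \<le> b powr (1 - e) - a powr (1 - e)"
proof -
  have y: "a powr (1 - e) * b powr (1 - (1 - e)) \<le> (1 - e) * a + (1 - (1 - e)) * b"
    using assms by (intro powr_mult_le_convex_comb) auto
  have "a powr (1 - e) = a powr (1 - e) * b powr e * b powr (-e)"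
    using assms by (simp add: powr_minus field_simps)
  also have "\<dots> \<le> ((1 - e) * a + e * b) * b powr (-e)"
    using y by (intro mult_right_mono) auto
  finally have 1: "a powr (1 - e) \<le> ((1 - e) * a + e * b) * b powr (-e)" .
  have 2: "b powr (1 - e) = b * b powr (-e)"
    using assms by (simp add: powr_diff powr_minus field_simps)
  show ?thesis using 1 2 by (simp add: algebra_simps)
qed

lemma sum_triangle_swap:
  fixes f :: "nat \<Rightarrow> nat \<Rightarrow> 'a::comm_monoid_add"
  shows "(\<Sum>k=1..N. \<Sum>j=1..k. f k j) = (\<Sum>j=1..N. \<Sum>k=j..N. f k j)"
proof (induction N)
  case 0 then show ?case by simp
next
  case (Suc N)
  have "(\<Sum>j=1..Suc N. \<Sum>k=j..Suc N. f k j) = (\<Sum>j=1..N. \<Sum>k=j..Suc N. f k j) + f (Suc N) (Suc N)"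
    by simp
  also have "(\<Sum>j=1..N. \<Sum>k=j..Suc N. f k j) = (\<Sum>j=1..N. (\<Sum>k=j..N. f k j) + f (Suc N) j)"
    by (intro sum.cong) auto
  also have "\<dots> = (\<Sum>j=1..N. \<Sum>k=j..N. f k j) + (\<Sum>j=1..N. f (Suc N) j)"
    by (simp add: sum.distrib)
  finally show ?case using Suc by (simp add: add.assoc)
qed

lemma avg_nonneg: "(\<And>j. 1 \<le> j \<Longrightarrow> 0 \<le> g j) \<Longrightarrow> 0 \<le> avg g n"
  unfolding avg_def by (intro divide_nonneg_nonneg sum_nonneg) auto

section \<open>The maximal inequality for an \<open>A\<^sub>q\<close> pair\<close>

text \<open>An \<open>A\<^sub>q\<close> pair of weights: \<open>\<sigma> = \<tau> powr (1 - q)\<close>, written as the identity that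
  feeds Hoelder's inequality, with the \<open>A\<^sub>q\<close> condition on initial segments \<open>{1..n}\<close>.
  For the theorem, \<open>\<tau> = w\<close>, \<open>\<sigma> = w powr (-1/(p-1))\<close> and \<open>q = p/(p-1)\<close>.\<close>
locale Aq_pair =
  fixes q K :: real and \<sigma> \<tau> :: "nat \<Rightarrow> real"
  assumes q: "1 < q"
  and sigma_pos: "\<And>j. 1 \<le> j \<Longrightarrow> 0 < \<sigma> j"
  and tau_pos: "\<And>j. 1 \<le> j \<Longrightarrow> 0 < \<tau> j"
  and dual: "\<And>j. 1 \<le> j \<Longrightarrow> \<sigma> j powr (1/q) * \<tau> j powr (1 - 1/q) = 1"
  and Aq: "\<And>n. 1 \<le> n \<Longrightarrow> (\<Sum>j=1..n. \<sigma> j) * (\<Sum>j=1..n. \<tau> j) powr (q - 1) \<le> K * real n powr q"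
begin

abbreviation "S n \<equiv> (\<Sum>j=1..n. \<sigma> j)"
abbreviation "T n \<equiv> (\<Sum>j=1..n. \<tau> j)"

lemma sigma_nonneg: "1 \<le> j \<Longrightarrow> 0 \<le> \<sigma> j"
  using sigma_pos[of j] by simp

lemma tau_nonneg: "1 \<le> j \<Longrightarrow> 0 \<le> \<tau> j"
  using tau_pos[of j] by simp

lemma S_pos: "1 \<le> n \<Longrightarrow> 0 < S n"
  using sigma_pos by (intro sum_pos) auto

lemma T_pos: "1 \<le> n \<Longrightarrow> 0 < T n"
  using tau_pos by (intro sum_pos) auto

lemma S_nonneg: "0 \<le> S n"
  by (intro sum_nonneg) (auto intro: sigma_nonneg)

lemma T_nonneg: "0 \<le> T n"
  by (intro sum_nonneg) (auto intro: tau_nonneg)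

lemma S_mono: "m \<le> n \<Longrightarrow> S m \<le> S n"
  by (intro sum_mono2) (auto intro: sigma_nonneg)

lemma T_mono: "m \<le> n \<Longrightarrow> T m \<le> T n"
  by (intro sum_mono2) (auto intro: tau_nonneg)

lemma K_pos: "0 < K"
proof -
  have "S 1 * T 1 powr (q - 1) \<le> K * real 1 powr q" using Aq[of 1] by simp
  moreover have "0 < S 1 * T 1 powr (q - 1)" using S_pos[of 1] T_pos[of 1] by simp
  ultimately show ?thesis by simp
qed

lemma card_le_Holder:
  assumes "finite E" "E \<subseteq> {1..}"
  shows "real (card E) \<le> (\<Sum>j\<in>E. \<sigma> j) powr (1/q) * (\<Sum>j\<in>E. \<tau> j) powr (1 - 1/q)"
proof -
  have "real (card E) = (\<Sum>j\<in>E. \<sigma> j powr (1/q) * \<tau> j powr (1 - 1/q))"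
    using dual assms by (simp add: subset_eq)
  also have "\<dots> \<le> (\<Sum>j\<in>E. \<sigma> j) powr (1/q) * (\<Sum>j\<in>E. \<tau> j) powr (1 - 1/q)"
    using assms sigma_pos tau_pos q by (intro Holder_inequality_sum) (auto simp: subset_eq less_imp_le)
  finally show ?thesis .
qed

lemma S_doubling:
  assumes "1 \<le> j"
  shows "S (2*j) \<le> K * 2 powr q * S j"
proof -
  have "real (card {1..j}) \<le> S j powr (1/q) * T j powr (1 - 1/q)"
    by (rule card_le_Holder) auto
  then have "real j powr q \<le> S j * T j powr (q - 1)"
    using q S_nonneg T_nonneg by (intro powr_le_of_le_Holder_bound) auto
  also have "\<dots> \<le> S j * T (2*j) powr (q - 1)"
    using q S_nonneg T_nonneg T_mono[of j "2*j"] by (intro mult_left_mono powr_mono2) auto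
  finally have 1: "real j powr q \<le> S j * T (2*j) powr (q - 1)" .
  have "S (2*j) * real j powr q \<le> S j * (S (2*j) * T (2*j) powr (q - 1))"
    using mult_left_mono[OF 1 S_nonneg[of "2*j"]] by (simp add: algebra_simps)
  also have "\<dots> \<le> S j * (K * real (2*j) powr q)"
    using Aq[of "2*j"] assms S_nonneg by (intro mult_left_mono) auto
  also have "\<dots> = (K * 2 powr q * S j) * real j powr q"
    by (simp add: powr_mult)
  finally show ?thesis using assms by simp
qed

lemma S_double_split: "S (2*j) = S j + (\<Sum>i\<in>{j+1..2*j}. \<sigma> i)"
  using sum.ub_add_nat[of 1 j \<sigma> j] by (simp add: mult_2)

lemma T_double_split: "T (2*j) = T j + (\<Sum>i\<in>{j+1..2*j}. \<tau> i)"
  using sum.ub_add_nat[of 1 j \<tau> j] by (simp add: mult_2)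

text \<open>Hoelder's inequality on the block \<open>{j+1..2j}\<close> together with the \<open>A\<^sub>q\<close> condition
  on \<open>{1..2j}\<close>: the block carries a fixed fraction of \<open>T (2*j)\<close>.\<close>
lemma T_double_le_block:
  assumes j: "1 \<le> j"
  shows "T (2*j) \<le> (K * 2 powr q) powr (1 / (q - 1)) * (T (2*j) - T j)"
proof -
  define D where "D = T (2*j) - T j"
  have Dn: "0 \<le> D" unfolding D_def using T_mono[of j "2*j"] by simp
  have D2: "D = (\<Sum>i\<in>{j+1..2*j}. \<tau> i)" unfolding D_def using T_double_split[of j] by simp
  have Sn: "0 \<le> (\<Sum>i\<in>{j+1..2*j}. \<sigma> i)" by (intro sum_nonneg) (auto intro: sigma_nonneg)
  have "real (card {j+1..2*j})
      \<le> (\<Sum>i\<in>{j+1..2*j}. \<sigma> i) powr (1/q) * (\<Sum>i\<in>{j+1..2*j}. \<tau> i) powr (1 - 1/q)"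
    by (intro card_le_Holder) auto
  then have "real j \<le> (\<Sum>i\<in>{j+1..2*j}. \<sigma> i) powr (1/q) * D powr (1 - 1/q)"
    unfolding D2 by simp
  also have "\<dots> \<le> S (2*j) powr (1/q) * D powr (1 - 1/q)"
  proof (rule mult_right_mono)
    show "(\<Sum>i\<in>{j+1..2*j}. \<sigma> i) powr (1/q) \<le> S (2*j) powr (1/q)"
      using S_double_split[of j] S_nonneg[of j] Sn q by (intro powr_mono2) auto
  qed simp
  finally have 1: "real j powr q \<le> S (2*j) * D powr (q - 1)"
    using q S_nonneg Dn by (intro powr_le_of_le_Holder_bound) auto
  have "real j powr q * T (2*j) powr (q - 1) \<le> S (2*j) * D powr (q - 1) * T (2*j) powr (q - 1)"
    using 1 by (rule mult_right_mono) simp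
  also have "\<dots> = (S (2*j) * T (2*j) powr (q - 1)) * D powr (q - 1)" by (simp only: ac_simps)
  also have "\<dots> \<le> (K * real (2*j) powr q) * D powr (q - 1)"
    using Aq[of "2*j"] j by (intro mult_right_mono) auto
  also have "\<dots> = real j powr q * (K * 2 powr q * D powr (q - 1))"
    by (simp add: powr_mult)
  finally have "real j powr q * T (2*j) powr (q - 1) \<le> real j powr q * (K * 2 powr q * D powr (q - 1))" .
  then have 2: "T (2*j) powr (q - 1) \<le> K * 2 powr q * D powr (q - 1)"
    using j by (subst (asm) mult_le_cancel_left_pos) auto
  have "(T (2*j) powr (q - 1)) powr (1/(q-1)) \<le> (K * 2 powr q * D powr (q - 1)) powr (1/(q-1))"
    using q 2 by (intro powr_mono2) auto
  also have "\<dots> = (K * 2 powr q) powr (1/(q-1)) * (D powr (q - 1)) powr (1/(q-1))"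
    using K_pos Dn by (simp add: powr_mult)
  also have "(D powr (q - 1)) powr (1/(q-1)) = D"
    using q Dn by (simp add: powr_powr)
  also have "(T (2*j) powr (q - 1)) powr (1/(q-1)) = T (2*j)"
    using q T_nonneg by (simp add: powr_powr)
  finally show ?thesis unfolding D_def .
qed

lemma T_powr_dyadic_decay:
  assumes "0 < \<gamma>"
  obtains \<beta> where "0 \<le> \<beta>" "\<beta> < 1" "\<And>j. 1 \<le> j \<Longrightarrow> T (2*j) powr (-\<gamma>) \<le> \<beta> * T j powr (-\<gamma>)"
proof -
  define L where "L = (K * 2 powr q) powr (1 / (q - 1))"
  have Lpos: "0 < L" unfolding L_def using K_pos by simp
  define \<alpha> where "\<alpha> = 1 - 1/L"
  have key: "T j \<le> \<alpha> * T (2*j)" if j: "1 \<le> j" for j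
  proof -
    have "T (2*j) \<le> L * (T (2*j) - T j)" using T_double_le_block[OF j] unfolding L_def .
    then have "T (2*j) / L \<le> T (2*j) - T j" using Lpos by (simp add: field_simps)
    then show ?thesis unfolding \<alpha>_def by (simp add: algebra_simps)
  qed
  have "0 < \<alpha> * T 2" using key[of 1] T_pos[of 1] by simp
  then have apos: "0 < \<alpha>" using T_pos[of 2] by (simp add: zero_less_mult_iff)
  have alt: "\<alpha> < 1" unfolding \<alpha>_def using Lpos by simp
  show ?thesis
  proof
    show "0 \<le> \<alpha> powr \<gamma>" by simp
    show "\<alpha> powr \<gamma> < 1" using powr_less_mono2[of \<gamma> \<alpha> 1] apos alt assms by simp
    fix j :: nat assume j: "1 \<le> j"
    have "T j powr \<gamma> \<le> (\<alpha> * T (2*j)) powr \<gamma>"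
      using key[OF j] assms T_nonneg by (intro powr_mono2) auto
    also have "\<dots> = \<alpha> powr \<gamma> * T (2*j) powr \<gamma>" using apos T_nonneg by (simp add: powr_mult)
    finally have 1: "T j powr \<gamma> \<le> \<alpha> powr \<gamma> * T (2*j) powr \<gamma>" .
    have p1: "0 < T j powr \<gamma>" "0 < T (2*j) powr \<gamma>" using T_pos[of j] T_pos[of "2*j"] j by auto
    have "T (2*j) powr (-\<gamma>) = 1 / T (2*j) powr \<gamma>" by (simp add: powr_minus divide_inverse)
    also have "\<dots> \<le> \<alpha> powr \<gamma> / T j powr \<gamma>"
      using 1 p1 by (simp add: divide_simps mult.commute)
    also have "\<dots> = \<alpha> powr \<gamma> * T j powr (-\<gamma>)" by (simp add: powr_minus divide_inverse)
    finally show "T (2*j) powr (-\<gamma>) \<le> \<alpha> powr \<gamma> * T j powr (-\<gamma>)" .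
  qed
qed

lemma sum_tau_T_powr_le:
  assumes "0 < e" "e < 1"
  shows "(\<Sum>j=1..n. \<tau> j * T j powr (-e)) \<le> T n powr (1 - e) / (1 - e)"
proof (induction n)
  case 0 then show ?case by simp
next
  case (Suc n)
  have Tn: "T (Suc n) = T n + \<tau> (Suc n)" by simp
  have "(1 - e) * T (Suc n) powr (-e) * (T (Suc n) - T n) \<le> T (Suc n) powr (1 - e) - T n powr (1 - e)"
    using assms T_nonneg[of n] T_mono[of n "Suc n"] T_pos[of "Suc n"]
    by (intro powr_diff_ge_tangent) auto
  then have "\<tau> (Suc n) * T (Suc n) powr (-e) \<le> (T (Suc n) powr (1 - e) - T n powr (1 - e)) / (1 - e)"
    using assms by (simp add: field_simps Tn)
  then show ?case using Suc.IH by (simp add: diff_divide_distrib)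
qed

text \<open>Hoelder's inequality with the weights \<open>\<sigma> j * T j powr ((q - 1)/2)\<close> and
  \<open>\<tau> j * T j powr (-1/2)\<close>; the half powers of \<open>T\<close> make the second factor summable.\<close>
lemma sum_powr_le:
  assumes g: "\<And>j. 1 \<le> j \<Longrightarrow> 0 \<le> g j"
  shows "(\<Sum>j=1..n. g j) powr q
    \<le> 2 powr (q - 1) * (\<Sum>j=1..n. g j powr q * \<sigma> j * T j powr ((q - 1)/2)) * T n powr ((q - 1)/2)"
proof -
  define X where "X j = g j powr q * \<sigma> j * T j powr ((q - 1)/2)" for j
  define Y where "Y j = \<tau> j * T j powr (-(1/2))" for j
  have XY: "X j powr (1/q) * Y j powr (1 - 1/q) = g j" if j: "1 \<le> j" for j
  proof -
    have gj: "0 \<le> g j" using g j .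
    have Tj: "0 < T j" using T_pos j .
    have "X j powr (1/q) * Y j powr (1 - 1/q)
        = (g j powr q) powr (1/q) * (\<sigma> j powr (1/q) * \<tau> j powr (1 - 1/q))
          * ((T j powr ((q - 1)/2)) powr (1/q) * (T j powr (-(1/2))) powr (1 - 1/q))"
      unfolding X_def Y_def using gj Tj sigma_pos[OF j] tau_pos[OF j] by (simp add: powr_mult ac_simps)
    also have "(g j powr q) powr (1/q) = g j" using q gj by (simp add: powr_powr)
    also have "\<sigma> j powr (1/q) * \<tau> j powr (1 - 1/q) = 1" using dual j .
    also have "(T j powr ((q - 1)/2)) powr (1/q) * (T j powr (-(1/2))) powr (1 - 1/q)
             = T j powr ((q - 1)/2 * (1/q) + (-(1/2)) * (1 - 1/q))"
      by (simp only: powr_powr powr_add)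
    also have "(q - 1)/2 * (1/q) + (-(1/2)) * (1 - 1/q) = 0" using q by (simp add: field_simps)
    finally show ?thesis using Tj by simp
  qed
  have Xn: "0 \<le> X j" if "1 \<le> j" for j unfolding X_def using sigma_nonneg[OF that] by simp
  have Yn: "0 \<le> Y j" if "1 \<le> j" for j unfolding Y_def using tau_nonneg[OF that] by simp
  have "(\<Sum>j=1..n. g j) = (\<Sum>j=1..n. X j powr (1/q) * Y j powr (1 - 1/q))"
    using XY by (intro sum.cong) auto
  also have "\<dots> \<le> (\<Sum>j=1..n. X j) powr (1/q) * (\<Sum>j=1..n. Y j) powr (1 - 1/q)"
    using q Xn Yn by (intro Holder_inequality_sum) auto
  also have "\<dots> \<le> (\<Sum>j=1..n. X j) powr (1/q) * (2 * T n powr (1/2)) powr (1 - 1/q)"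
  proof (rule mult_left_mono)
    have "(\<Sum>j=1..n. Y j) \<le> T n powr (1 - 1/2) / (1 - 1/2)"
      unfolding Y_def by (rule sum_tau_T_powr_le) auto
    then have "(\<Sum>j=1..n. Y j) \<le> 2 * T n powr (1/2)" by simp
    moreover have "0 \<le> (\<Sum>j=1..n. Y j)" using Yn by (intro sum_nonneg) auto
    ultimately show "(\<Sum>j=1..n. Y j) powr (1 - 1/q) \<le> (2 * T n powr (1/2)) powr (1 - 1/q)"
      using q by (intro powr_mono2) auto
  qed simp
  finally have "(\<Sum>j=1..n. g j) powr q \<le> (\<Sum>j=1..n. X j) * (2 * T n powr (1/2)) powr (q - 1)"
    using q Xn g by (intro powr_le_of_le_Holder_bound) (auto intro: sum_nonneg)
  also have "(2 * T n powr (1/2)) powr (q - 1) = 2 powr (q - 1) * T n powr ((q - 1)/2)"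
    using T_nonneg[of n] by (simp add: powr_mult powr_powr)
  finally show ?thesis unfolding X_def by (simp add: ac_simps)
qed

lemma avg_powr_le:
  assumes g: "\<And>j. 1 \<le> j \<Longrightarrow> 0 \<le> g j" and n: "1 \<le> n"
  shows "(avg g n) powr q \<le> 2 powr (q - 1) * K
    * (\<Sum>j=1..n. g j powr q * \<sigma> j * T j powr ((q - 1)/2)) * T n powr (-((q - 1)/2)) / S n"
proof -
  define A where "A = (\<Sum>j=1..n. g j powr q * \<sigma> j * T j powr ((q - 1)/2))"
  have An: "0 \<le> A" unfolding A_def by (intro sum_nonneg) (auto intro!: mult_nonneg_nonneg sigma_nonneg)
  have Sg: "0 \<le> (\<Sum>j=1..n. g j)" using g by (intro sum_nonneg) auto
  have Tp: "0 < T n" "0 < S n" using T_pos S_pos n by auto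
  have "(avg g n) powr q = (\<Sum>j=1..n. g j) powr q / real n powr q"
    unfolding avg_def using Sg by (simp add: powr_divide)
  also have "\<dots> \<le> 2 powr (q - 1) * A * T n powr ((q - 1)/2) / real n powr q"
    using sum_powr_le[OF g] unfolding A_def by (intro divide_right_mono) auto
  also have "T n powr ((q - 1)/2) = T n powr (q - 1) * T n powr (-((q - 1)/2))"
  proof -
    have "(q - 1)/2 = (q - 1) + (-((q - 1)/2))" by (simp add: field_simps)
    then show ?thesis by (metis powr_add)
  qed
  also have "2 powr (q - 1) * A * (T n powr (q - 1) * T n powr (-((q - 1)/2))) / real n powr q
      = 2 powr (q - 1) * A * T n powr (-((q - 1)/2)) * (T n powr (q - 1) / real n powr q)"
    by simp
  also have "\<dots> \<le> 2 powr (q - 1) * A * T n powr (-((q - 1)/2)) * (K / S n)"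
  proof (rule mult_left_mono)
    have "S n * T n powr (q - 1) \<le> K * real n powr q" using Aq n .
    then show "T n powr (q - 1) / real n powr q \<le> K / S n"
      using Tp n by (simp add: field_simps mult.commute)
  qed (use An in simp)
  finally show ?thesis unfolding A_def by (simp add: ac_simps)
qed

end

locale Aq_pair_decay = Aq_pair +
  fixes \<beta> :: real
  assumes beta_nonneg: "0 \<le> \<beta>" and beta_less_1: "\<beta> < 1"
  and dyadic_decay: "\<And>j. 1 \<le> j \<Longrightarrow> T (2*j) powr (-((q - 1)/2)) \<le> \<beta> * T j powr (-((q - 1)/2))"
begin

abbreviation "\<gamma> \<equiv> (q - 1)/2"
abbreviation "C1 \<equiv> K * 2 powr q / (1 - \<beta>)"

lemma gamma_pos: "0 < \<gamma>" using q by simp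

lemma C1_pos: "0 < C1"
  using K_pos beta_less_1 by simp

lemma T_powr_antimono: "1 \<le> j \<Longrightarrow> j \<le> k \<Longrightarrow> T k powr (-\<gamma>) \<le> T j powr (-\<gamma>)"
  using T_pos[of j] T_mono[of j k] gamma_pos by (intro powr_mono2') auto

lemma dyadic_block_sum_le:
  assumes j: "1 \<le> j" and A: "A \<subseteq> {j..2*j}"
  shows "(\<Sum>k\<in>A. \<sigma> k / S k * T k powr (-\<gamma>)) \<le> K * 2 powr q * T j powr (-\<gamma>)"
proof -
  have fin: "finite A" using A finite_subset by blast
  have Sj: "0 < S j" using S_pos j .
  have "(\<Sum>k\<in>A. \<sigma> k / S k * T k powr (-\<gamma>)) \<le> (\<Sum>k\<in>A. \<sigma> k * (T j powr (-\<gamma>) / S j))"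
  proof (rule sum_mono)
    fix k assume k: "k \<in> A"
    then have kj: "j \<le> k" "1 \<le> k" using A j by auto
    have "\<sigma> k / S k \<le> \<sigma> k / S j"
      using S_mono[OF kj(1)] Sj sigma_nonneg[OF kj(2)] by (intro divide_left_mono) auto
    moreover have "T k powr (-\<gamma>) \<le> T j powr (-\<gamma>)" using T_powr_antimono j kj by auto
    ultimately have "\<sigma> k / S k * T k powr (-\<gamma>) \<le> \<sigma> k / S j * T j powr (-\<gamma>)"
      using sigma_nonneg[OF kj(2)] Sj by (intro mult_mono) auto
    then show "\<sigma> k / S k * T k powr (-\<gamma>) \<le> \<sigma> k * (T j powr (-\<gamma>) / S j)" by simp
  qed
  also have "\<dots> = (\<Sum>k\<in>A. \<sigma> k) * (T j powr (-\<gamma>) / S j)" by (rule sum_distrib_right[symmetric])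
  also have "\<dots> \<le> S (2*j) * (T j powr (-\<gamma>) / S j)"
  proof (rule mult_right_mono)
    show "(\<Sum>k\<in>A. \<sigma> k) \<le> S (2*j)" using A j by (intro sum_mono2) (auto intro: sigma_nonneg)
  qed (use Sj in simp)
  also have "\<dots> \<le> (K * 2 powr q * S j) * (T j powr (-\<gamma>) / S j)"
    using S_doubling[OF j] Sj by (intro mult_right_mono) auto
  also have "\<dots> = K * 2 powr q * T j powr (-\<gamma>)" using Sj by simp
  finally show ?thesis .
qed

text \<open>Split \<open>{j..N}\<close> into the block \<open>{j..<2j}\<close> and the rest; the rest is handled by
  induction and gains the factor \<open>\<beta>\<close>, so the bounds sum to a geometric series.\<close>
lemma sum_from_le:
  assumes "1 \<le> j"
  shows "(\<Sum>k=j..N. \<sigma> k / S k * T k powr (-\<gamma>)) \<le> C1 * T j powr (-\<gamma>)"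
  using assms
proof (induction "Suc N - j" arbitrary: j rule: less_induct)
  case less
  have j: "1 \<le> j" using less.prems .
  have C1_eq: "K * 2 powr q + C1 * \<beta> = C1" using beta_less_1 by (simp add: field_simps)
  have C1_ge: "K * 2 powr q \<le> C1" using beta_nonneg beta_less_1 K_pos by (simp add: field_simps)
  show ?case
  proof (cases "N < 2*j")
    case True
    have "(\<Sum>k=j..N. \<sigma> k / S k * T k powr (-\<gamma>)) \<le> K * 2 powr q * T j powr (-\<gamma>)"
      using True j by (intro dyadic_block_sum_le) auto
    also have "\<dots> \<le> C1 * T j powr (-\<gamma>)" using C1_ge by (rule mult_right_mono) simp
    finally show ?thesis .
  next
    case False
    have eq: "{j..N} = {j..<2*j} \<union> {2*j..N}" using False by auto
    have "(\<Sum>k=j..N. \<sigma> k / S k * T k powr (-\<gamma>))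
        = (\<Sum>k\<in>{j..<2*j}. \<sigma> k / S k * T k powr (-\<gamma>)) + (\<Sum>k=2*j..N. \<sigma> k / S k * T k powr (-\<gamma>))"
      unfolding eq by (intro sum.union_disjoint) auto
    also have "\<dots> \<le> K * 2 powr q * T j powr (-\<gamma>) + C1 * T (2*j) powr (-\<gamma>)"
    proof (rule add_mono)
      show "(\<Sum>k\<in>{j..<2*j}. \<sigma> k / S k * T k powr (-\<gamma>)) \<le> K * 2 powr q * T j powr (-\<gamma>)"
        using j by (intro dyadic_block_sum_le) auto
      show "(\<Sum>k=2*j..N. \<sigma> k / S k * T k powr (-\<gamma>)) \<le> C1 * T (2*j) powr (-\<gamma>)"
        using j False by (intro less.hyps) auto
    qed
    also have "\<dots> \<le> K * 2 powr q * T j powr (-\<gamma>) + C1 * (\<beta> * T j powr (-\<gamma>))"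
      using dyadic_decay[OF j] C1_pos by (intro add_left_mono mult_left_mono) auto
    also have "\<dots> = (K * 2 powr q + C1 * \<beta>) * T j powr (-\<gamma>)" by (simp only: distrib_right mult.assoc)
    also have "\<dots> = C1 * T j powr (-\<gamma>)" by (simp only: C1_eq)
    finally show ?thesis .
  qed
qed

abbreviation "tail g k \<equiv> (\<Sum>j. if k < j then g j powr q * \<sigma> j / S j else 0)"

lemma tail_summable:
  assumes gs: "summable (\<lambda>i. g (Suc i) powr q * \<sigma> (Suc i))"
  shows "summable (\<lambda>j. if k < j then g j powr q * \<sigma> j / S j else 0)"
proof -
  define a where "a j = (if 1 \<le> j then g j powr q * \<sigma> j else 0)" for j
  have "summable (\<lambda>i. a (Suc i))" using gs unfolding a_def by simp
  then have sa: "summable a" by (simp add: summable_Suc_iff)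
  show ?thesis
  proof (rule summable_comparison_test'[of "\<lambda>j. a j / S 1" 0])
    show "summable (\<lambda>j. a j / S 1)" using sa by (rule summable_divide)
    fix j :: nat
    show "norm (if k < j then g j powr q * \<sigma> j / S j else 0) \<le> a j / S 1"
    proof (cases "k < j \<and> 1 \<le> j")
      case True
      then have j: "1 \<le> j" by simp
      have an: "0 \<le> g j powr q * \<sigma> j" using sigma_nonneg[OF j] by simp
      have "g j powr q * \<sigma> j / S j \<le> g j powr q * \<sigma> j / S 1"
        using S_pos[of 1] S_mono[OF j] an by (intro divide_left_mono) auto
      then show ?thesis using True an S_pos[OF j] unfolding a_def by simp
    next
      case False
      then show ?thesis unfolding a_def using sigma_nonneg S_pos[of 1] by auto
    qed
  qed
qed

text \<open>The average over \<open>{1..n}\<close>, \<open>n \<ge> k\<close>, is split at \<open>k\<close>: the head is controlled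
  at scale \<open>k\<close>, each later term \<open>j\<close> at its own scale \<open>S j\<close>.\<close>
abbreviation "split_bound g k \<equiv>
  (\<Sum>j=1..k. g j powr q * \<sigma> j * T j powr \<gamma>) * T k powr (-\<gamma>) / S k + tail g k"

lemma later_term_le:
  assumes j: "1 \<le> j" "j \<le> n"
  shows "g j powr q * \<sigma> j * T j powr \<gamma> * T n powr (-\<gamma>) / S n \<le> g j powr q * \<sigma> j / S j"
proof -
  have Tj: "0 < T j" "0 < S j" using T_pos S_pos j by auto
  have aj: "0 \<le> g j powr q * \<sigma> j" using sigma_nonneg[OF j(1)] by simp
  have "T j powr \<gamma> \<le> T n powr \<gamma>" using T_mono[OF j(2)] Tj gamma_pos by (intro powr_mono2) auto
  then have 1: "T j powr \<gamma> * T n powr (-\<gamma>) \<le> 1"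
    using Tj T_mono[OF j(2)] by (simp add: powr_minus divide_simps)
  have "g j powr q * \<sigma> j * T j powr \<gamma> * T n powr (-\<gamma>) / S n
      = g j powr q * \<sigma> j * (T j powr \<gamma> * T n powr (-\<gamma>)) / S n"
    by (simp add: ac_simps)
  also have "\<dots> \<le> g j powr q * \<sigma> j * 1 / S n"
    using 1 aj Tj S_mono[OF j(2)] by (intro divide_right_mono mult_left_mono) auto
  also have "\<dots> \<le> g j powr q * \<sigma> j / S j"
    using aj Tj S_mono[OF j(2)] by (simp add: divide_left_mono)
  finally show ?thesis .
qed

lemma head_le_split_bound:
  assumes gs: "summable (\<lambda>i. g (Suc i) powr q * \<sigma> (Suc i))"
  and k: "1 \<le> k" and kn: "k \<le> n"
  shows "(\<Sum>j=1..n. g j powr q * \<sigma> j * T j powr \<gamma>) * T n powr (-\<gamma>) / S n \<le> split_bound g k"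
proof -
  define P where "P j = g j powr q * \<sigma> j * T j powr \<gamma>" for j
  have Sn: "0 < S n" "0 < S k" using S_pos k kn by auto
  have eq: "{1..n} = {1..k} \<union> {Suc k..n}" using kn by auto
  have "(\<Sum>j=1..n. P j) * T n powr (-\<gamma>) / S n
      = (\<Sum>j=1..k. P j) * T n powr (-\<gamma>) / S n + (\<Sum>j=Suc k..n. P j * T n powr (-\<gamma>) / S n)"
    unfolding eq by (subst sum.union_disjoint)
      (auto simp: distrib_right add_divide_distrib sum_distrib_right sum_divide_distrib)
  also have "\<dots> \<le> (\<Sum>j=1..k. P j) * T k powr (-\<gamma>) / S k + tail g k"
  proof (rule add_mono)
    have "0 \<le> (\<Sum>j=1..k. P j)" unfolding P_def by (intro sum_nonneg) (simp add: sigma_nonneg)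
    moreover have "T n powr (-\<gamma>) / S n \<le> T k powr (-\<gamma>) / S k"
      using T_powr_antimono[OF k kn] Sn S_mono[OF kn] by (intro frac_le) auto
    ultimately show "(\<Sum>j=1..k. P j) * T n powr (-\<gamma>) / S n \<le> (\<Sum>j=1..k. P j) * T k powr (-\<gamma>) / S k"
      by (metis mult_left_mono times_divide_eq_right)
    have "(\<Sum>j=Suc k..n. P j * T n powr (-\<gamma>) / S n)
        \<le> (\<Sum>j=Suc k..n. if k < j then g j powr q * \<sigma> j / S j else 0)"
    proof (rule sum_mono)
      fix j assume "j \<in> {Suc k..n}"
      then have "1 \<le> j" "j \<le> n" "k < j" using k by auto
      then show "P j * T n powr (-\<gamma>) / S n \<le> (if k < j then g j powr q * \<sigma> j / S j else 0)"
        unfolding P_def using later_term_le by simp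
    qed
    also have "\<dots> \<le> tail g k"
      using tail_summable[OF gs] sigma_nonneg S_pos
      by (intro sum_le_suminf) (auto intro!: divide_nonneg_pos mult_nonneg_nonneg)
    finally show "(\<Sum>j=Suc k..n. P j * T n powr (-\<gamma>) / S n) \<le> tail g k" .
  qed
  finally show ?thesis unfolding P_def .
qed

lemma avg_powr_le_split_bound:
  assumes gnn: "\<And>j. 1 \<le> j \<Longrightarrow> 0 \<le> g j" and gs: "summable (\<lambda>i. g (Suc i) powr q * \<sigma> (Suc i))"
  and k: "1 \<le> k" and kn: "k \<le> n"
  shows "(avg g n) powr q \<le> 2 powr (q - 1) * K * split_bound g k"
proof -
  have "(avg g n) powr q \<le> 2 powr (q - 1) * K
      * ((\<Sum>j=1..n. g j powr q * \<sigma> j * T j powr \<gamma>) * T n powr (-\<gamma>) / S n)"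
    using avg_powr_le[of g n, OF gnn] k kn by simp
  also have "\<dots> \<le> 2 powr (q - 1) * K * split_bound g k"
    using head_le_split_bound[OF gs k kn] K_pos by (intro mult_left_mono) auto
  finally show ?thesis .
qed

lemma sup_avg:
  assumes gnn: "\<And>j. 1 \<le> j \<Longrightarrow> 0 \<le> g j" and gs: "summable (\<lambda>i. g (Suc i) powr q * \<sigma> (Suc i))"
  and k: "1 \<le> k"
  shows "bdd_above (avg g ` {k..})"
    and "(SUP n\<in>{k..}. avg g n) powr q \<le> 2 powr (q - 1) * K * split_bound g k"
proof -
  define B where "B = 2 powr (q - 1) * K * split_bound g k"
  have each: "avg g n \<le> B powr (1/q)" if "k \<le> n" for n
    using avg_nonneg[OF gnn] avg_powr_le_split_bound[OF gnn gs k that] q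
    unfolding B_def by (intro le_powr_inverse_of_powr_le) auto
  show bdd: "bdd_above (avg g ` {k..})" using each by (intro bdd_aboveI2) auto
  have "0 \<le> avg g k powr q" by simp
  also have "\<dots> \<le> B" unfolding B_def using avg_powr_le_split_bound[OF gnn gs k] by simp
  finally have B0: "0 \<le> B" .
  have "avg g k \<le> (SUP n\<in>{k..}. avg g n)" using bdd by (intro cSUP_upper) auto
  then have nn: "0 \<le> (SUP n\<in>{k..}. avg g n)" using avg_nonneg[of g k, OF gnn] by simp
  have "(SUP n\<in>{k..}. avg g n) \<le> B powr (1/q)"
    using each by (intro cSUP_least) auto
  then have "(SUP n\<in>{k..}. avg g n) powr q \<le> (B powr (1/q)) powr q"
    using nn q by (intro powr_mono2) auto
  also have "\<dots> = B" using B0 q by (simp add: powr_powr)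
  finally show "(SUP n\<in>{k..}. avg g n) powr q \<le> 2 powr (q - 1) * K * split_bound g k"
    unfolding B_def .
qed

lemma sum_sigma_head_le:
  assumes gs: "summable (\<lambda>i. g (Suc i) powr q * \<sigma> (Suc i))"
  shows "(\<Sum>k=1..N. \<sigma> k * ((\<Sum>j=1..k. g j powr q * \<sigma> j * T j powr \<gamma>) * T k powr (-\<gamma>) / S k))
     \<le> C1 * (\<Sum>i. g (Suc i) powr q * \<sigma> (Suc i))"
proof -
  define P where "P j = g j powr q * \<sigma> j * T j powr \<gamma>" for j
  define E where "E k = \<sigma> k / S k * T k powr (-\<gamma>)" for k
  have "(\<Sum>k=1..N. \<sigma> k * ((\<Sum>j=1..k. P j) * T k powr (-\<gamma>) / S k)) = (\<Sum>k=1..N. \<Sum>j=1..k. P j * E k)"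
    unfolding E_def
    by (intro sum.cong refl) (simp add: sum_distrib_left sum_distrib_right sum_divide_distrib ac_simps)
  also have "\<dots> = (\<Sum>j=1..N. \<Sum>k=j..N. P j * E k)" by (rule sum_triangle_swap)
  also have "\<dots> = (\<Sum>j=1..N. P j * (\<Sum>k=j..N. E k))" by (simp add: sum_distrib_left)
  also have "\<dots> \<le> (\<Sum>j=1..N. P j * (C1 * T j powr (-\<gamma>)))"
  proof (rule sum_mono)
    fix j assume j: "j \<in> {1..N}"
    then have "0 \<le> P j" unfolding P_def using sigma_nonneg[of j] by simp
    then show "P j * (\<Sum>k=j..N. E k) \<le> P j * (C1 * T j powr (-\<gamma>))"
      unfolding E_def using sum_from_le[of j N] j by (intro mult_left_mono) auto
  qed
  also have "\<dots> = C1 * (\<Sum>j=1..N. g j powr q * \<sigma> j)"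
  proof -
    have "P j * (C1 * T j powr (-\<gamma>)) = C1 * (g j powr q * \<sigma> j)" if "j \<in> {1..N}" for j
    proof -
      have "0 < T j" using T_pos that by auto
      then have "T j powr \<gamma> * T j powr (-\<gamma>) = 1" by (simp add: powr_add[symmetric])
      then show ?thesis unfolding P_def
        by (metis (no_types, lifting) mult.assoc mult.commute mult.right_neutral)
    qed
    then have "(\<Sum>j=1..N. P j * (C1 * T j powr (-\<gamma>))) = (\<Sum>j=1..N. C1 * (g j powr q * \<sigma> j))"
      by (intro sum.cong) auto
    then show ?thesis by (simp add: sum_distrib_left)
  qed
  also have "\<dots> \<le> C1 * (\<Sum>i. g (Suc i) powr q * \<sigma> (Suc i))"
  proof (rule mult_left_mono)
    have "(\<Sum>j=1..N. g j powr q * \<sigma> j) = (\<Sum>i<N. g (Suc i) powr q * \<sigma> (Suc i))"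
      using sum.atLeast1_atMost_eq[of "\<lambda>j. g j powr q * \<sigma> j" N] by simp
    also have "\<dots> \<le> (\<Sum>i. g (Suc i) powr q * \<sigma> (Suc i))"
      using gs sigma_nonneg by (intro sum_le_suminf) auto
    finally show "(\<Sum>j=1..N. g j powr q * \<sigma> j) \<le> (\<Sum>i. g (Suc i) powr q * \<sigma> (Suc i))" .
  qed (use C1_pos in simp)
  finally show ?thesis unfolding P_def .
qed

lemma sum_sigma_tail_le:
  assumes gs: "summable (\<lambda>i. g (Suc i) powr q * \<sigma> (Suc i))"
  shows "(\<Sum>k=1..N. \<sigma> k * tail g k) \<le> (\<Sum>i. g (Suc i) powr q * \<sigma> (Suc i))"
proof -
  define a where "a j = (if 1 \<le> j then g j powr q * \<sigma> j else 0)" for j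
  have "summable (\<lambda>i. a (Suc i))" using gs unfolding a_def by simp
  then have sa: "summable a" by (simp add: summable_Suc_iff)
  have A: "suminf a = (\<Sum>i. g (Suc i) powr q * \<sigma> (Suc i))"
    using suminf_split_head[OF sa] unfolding a_def by simp
  define t where "t k j = (if k < j then g j powr q * \<sigma> j / S j else 0)" for k j
  have ts: "summable (t k)" for k unfolding t_def using tail_summable[OF gs] .
  have "(\<Sum>k=1..N. \<sigma> k * tail g k) = (\<Sum>k=1..N. \<Sum>j. \<sigma> k * t k j)"
    unfolding t_def by (intro sum.cong refl suminf_mult[symmetric] tail_summable[OF gs])
  also have "\<dots> = (\<Sum>j. \<Sum>k=1..N. \<sigma> k * t k j)"
    using ts by (intro suminf_sum[symmetric] summable_mult) auto
  also have "\<dots> \<le> suminf a"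
  proof (rule suminf_le)
    show "summable (\<lambda>j. \<Sum>k=1..N. \<sigma> k * t k j)" using ts by (intro summable_sum summable_mult) auto
    show "summable a" by (rule sa)
    fix j
    show "(\<Sum>k=1..N. \<sigma> k * t k j) \<le> a j"
    proof (cases "1 \<le> j")
      case False then show ?thesis unfolding t_def a_def by simp
    next
      case True
      have aj: "0 \<le> g j powr q * \<sigma> j" using sigma_nonneg[OF True] by simp
      have Sj: "0 < S j" using S_pos True .
      have "(\<Sum>k=1..N. \<sigma> k * t k j)
          = (\<Sum>k\<in>{1..N}. (if k < j then \<sigma> k else 0)) * (g j powr q * \<sigma> j / S j)"
        unfolding t_def sum_distrib_right by (intro sum.cong refl) auto
      also have "(\<Sum>k\<in>{1..N}. if k < j then \<sigma> k else 0) = (\<Sum>k\<in>{1..N} \<inter> {..<j}. \<sigma> k)"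
        by (simp add: sum.inter_restrict)
      also have "\<dots> \<le> S j" by (intro sum_mono2) (auto intro: sigma_nonneg)
      finally have "(\<Sum>k=1..N. \<sigma> k * t k j) \<le> S j * (g j powr q * \<sigma> j / S j)"
        using aj Sj by (smt (verit) divide_nonneg_pos mult_right_mono)
      then show ?thesis using Sj True unfolding a_def by simp
    qed
  qed
  finally show ?thesis using A by simp
qed

lemma maximal_inequality:
  assumes gnn: "\<And>j. 1 \<le> j \<Longrightarrow> 0 \<le> g j" and gs: "summable (\<lambda>i. g (Suc i) powr q * \<sigma> (Suc i))"
  shows "summable (\<lambda>i. \<sigma> (Suc i) * (SUP n\<in>{Suc i..}. avg g n) powr q)"
    and "(\<Sum>i. \<sigma> (Suc i) * (SUP n\<in>{Suc i..}. avg g n) powr q)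
      \<le> 2 powr (q - 1) * K * (C1 + 1) * (\<Sum>i. g (Suc i) powr q * \<sigma> (Suc i))"
proof -
  define A where "A = (\<Sum>i. g (Suc i) powr q * \<sigma> (Suc i))"
  define M where "M k = (SUP n\<in>{k..}. avg g n)" for k
  have partial: "(\<Sum>k=1..N. \<sigma> k * M k powr q) \<le> 2 powr (q - 1) * K * (C1 + 1) * A" for N
  proof -
    have "(\<Sum>k=1..N. \<sigma> k * M k powr q) \<le> (\<Sum>k=1..N. \<sigma> k * (2 powr (q - 1) * K * split_bound g k))"
      unfolding M_def using sup_avg(2)[OF gnn gs] sigma_nonneg by (intro sum_mono mult_left_mono) auto
    also have "\<dots> = 2 powr (q - 1) * K
        * ((\<Sum>k=1..N. \<sigma> k * ((\<Sum>j=1..k. g j powr q * \<sigma> j * T j powr \<gamma>) * T k powr (-\<gamma>) / S k))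
          + (\<Sum>k=1..N. \<sigma> k * tail g k))"
      by (simp add: sum_distrib_left distrib_left sum.distrib ac_simps)
    also have "\<dots> \<le> 2 powr (q - 1) * K * (C1 * A + A)"
      unfolding A_def using sum_sigma_head_le[OF gs, of N] sum_sigma_tail_le[OF gs, of N] K_pos
      by (intro mult_left_mono add_mono) auto
    finally show ?thesis by (simp add: algebra_simps)
  qed
  have shift: "(\<Sum>i<N. \<sigma> (Suc i) * M (Suc i) powr q) = (\<Sum>k=1..N. \<sigma> k * M k powr q)" for N
    using sum.atLeast1_atMost_eq[of "\<lambda>k. \<sigma> k * M k powr q" N] by simp
  show s: "summable (\<lambda>i. \<sigma> (Suc i) * (SUP n\<in>{Suc i..}. avg g n) powr q)"
    using partial shift sigma_nonneg unfolding M_def[symmetric] by (intro summableI_nonneg_bounded) auto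
  show "(\<Sum>i. \<sigma> (Suc i) * (SUP n\<in>{Suc i..}. avg g n) powr q)
      \<le> 2 powr (q - 1) * K * (C1 + 1) * (\<Sum>i. g (Suc i) powr q * \<sigma> (Suc i))"
    using s partial shift unfolding M_def[symmetric] A_def[symmetric] by (intro suminf_le_const) auto
qed

end

context Aq_pair
begin

lemma exists_decay_rate:
  obtains \<beta> where "Aq_pair_decay q K \<sigma> \<tau> \<beta>"
proof -
  obtain \<beta> where "0 \<le> \<beta>" "\<beta> < 1"
    "\<And>j. 1 \<le> j \<Longrightarrow> T (2*j) powr (-((q - 1)/2)) \<le> \<beta> * T j powr (-((q - 1)/2))"
    using T_powr_dyadic_decay[of "(q - 1)/2"] q by auto
  then have "Aq_pair_decay q K \<sigma> \<tau> \<beta>"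
    by (intro Aq_pair_decay.intro Aq_pair_decay_axioms.intro Aq_pair_axioms)
  then show ?thesis by (rule that)
qed

lemma sup_avg_bdd_above:
  assumes "\<And>j. 1 \<le> j \<Longrightarrow> 0 \<le> g j" "summable (\<lambda>i. g (Suc i) powr q * \<sigma> (Suc i))" "1 \<le> k"
  shows "bdd_above (avg g ` {k..})"
proof -
  obtain \<beta> where "Aq_pair_decay q K \<sigma> \<tau> \<beta>" by (rule exists_decay_rate)
  then interpret Aq_pair_decay q K \<sigma> \<tau> \<beta> .
  show ?thesis using sup_avg(1)[OF assms] .
qed

lemma sup_avg_summable:
  assumes "\<And>j. 1 \<le> j \<Longrightarrow> 0 \<le> g j" "summable (\<lambda>i. g (Suc i) powr q * \<sigma> (Suc i))"
  shows "summable (\<lambda>i. \<sigma> (Suc i) * (SUP n\<in>{Suc i..}. avg g n) powr q)"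
proof -
  obtain \<beta> where "Aq_pair_decay q K \<sigma> \<tau> \<beta>" by (rule exists_decay_rate)
  then interpret Aq_pair_decay q K \<sigma> \<tau> \<beta> .
  show ?thesis using maximal_inequality(1)[OF assms] .
qed

lemma maximal_inequality_bound:
  obtains C where "0 \<le> C"
    and "\<And>g. (\<And>j. 1 \<le> j \<Longrightarrow> 0 \<le> g j) \<Longrightarrow> summable (\<lambda>i. g (Suc i) powr q * \<sigma> (Suc i)) \<Longrightarrow>
       (\<Sum>i. \<sigma> (Suc i) * (SUP n\<in>{Suc i..}. avg g n) powr q) \<le> C * (\<Sum>i. g (Suc i) powr q * \<sigma> (Suc i))"
proof -
  obtain \<beta> where "Aq_pair_decay q K \<sigma> \<tau> \<beta>" by (rule exists_decay_rate)
  then interpret Aq_pair_decay q K \<sigma> \<tau> \<beta> .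
  show ?thesis
  proof (rule that[of "2 powr (q - 1) * K * (C1 + 1)"])
    show "0 \<le> 2 powr (q - 1) * K * (C1 + 1)" using K_pos C1_pos by simp
  next
    fix g :: "nat \<Rightarrow> real"
    assume "\<And>j. 1 \<le> j \<Longrightarrow> 0 \<le> g j" "summable (\<lambda>i. g (Suc i) powr q * \<sigma> (Suc i))"
    then show "(\<Sum>i. \<sigma> (Suc i) * (SUP n\<in>{Suc i..}. avg g n) powr q)
      \<le> 2 powr (q - 1) * K * (C1 + 1) * (\<Sum>i. g (Suc i) powr q * \<sigma> (Suc i))"
      by (rule maximal_inequality(2))
  qed
qed

end

section \<open>Boundedness of \<open>Mprime w\<close> on \<open>l\<^sup>p\<^sup>'(w)\<close>\<close>

lemma Ap_char_le_Ap_const: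
  assumes "in_Ap q w" "1 \<le> n"
  shows "Ap_char q w n \<le> Ap_const q w"
  using assms unfolding Ap_const_def in_Ap_def by (intro cSUP_upper) auto

lemma Ap_dual_condition:
  fixes p :: real and w :: "nat \<Rightarrow> real"
  assumes p: "1 < p" and w: "weight w" and Ap: "in_Ap p w" and n: "1 \<le> n"
  shows "(\<Sum>j=1..n. w j powr (-1/(p-1))) * (\<Sum>j=1..n. w j) powr (p/(p-1) - 1)
         \<le> Ap_const p w powr (1/(p-1)) * real n powr (p/(p-1))"
proof -
  define S where "S = (\<Sum>j=1..n. w j powr (-1/(p-1)))"
  define T where "T = (\<Sum>j=1..n. w j)"
  have wp: "\<And>j. 1 \<le> j \<Longrightarrow> 0 < w j" using w unfolding weight_def by auto
  have Sp: "0 < S" unfolding S_def using n wp by (intro sum_pos) (auto simp: less_imp_neq[symmetric])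
  have Tp: "0 < T" unfolding T_def using n wp by (intro sum_pos) auto
  have np: "0 < real n" using n by simp
  have "(T / n) * (S / n) powr (p - 1) \<le> Ap_const p w"
    using Ap_char_le_Ap_const[OF Ap n] unfolding Ap_char_def avg_def S_def T_def by simp
  then have "((T / n) * (S / n) powr (p - 1)) powr (1/(p-1)) \<le> Ap_const p w powr (1/(p-1))"
    using p Tp Sp np by (intro powr_mono2) auto
  moreover have "((T / n) * (S / n) powr (p - 1)) powr (1/(p-1)) = (T / n) powr (1/(p-1)) * (S / n)"
  proof -
    have "((T / n) * (S / n) powr (p - 1)) powr (1/(p-1))
        = (T / n) powr (1/(p-1)) * ((S / n) powr (p - 1)) powr (1/(p-1))"
      using Tp np by (intro powr_mult)
    also have "((S / n) powr (p - 1)) powr (1/(p-1)) = (S / n) powr ((p - 1) * (1/(p-1)))"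
      by (rule powr_powr)
    also have "(p - 1) * (1/(p-1)) = 1" using p by simp
    finally show ?thesis using Sp np by simp
  qed
  ultimately have 2: "(T / n) powr (1/(p-1)) * (S / n) \<le> Ap_const p w powr (1/(p-1))" by simp
  have "S * T powr (p/(p-1) - 1) = ((T / n) powr (1/(p-1)) * (S / n)) * real n powr (p/(p-1))"
  proof -
    have e: "p/(p-1) - 1 = 1/(p-1)" "p/(p-1) = 1/(p-1) + 1" using p by (auto simp: field_simps)
    have "((T / n) powr (1/(p-1)) * (S / n)) * real n powr (p/(p-1))
        = (T powr (1/(p-1)) / real n powr (1/(p-1))) * (S / n) * (real n powr (1/(p-1)) * real n)"
      using Tp np unfolding e(2) by (simp add: powr_divide powr_add)
    also have "\<dots> = S * T powr (1/(p-1))" using np by (simp add: field_simps)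
    finally show ?thesis unfolding e(1) by simp
  qed
  also have "\<dots> \<le> Ap_const p w powr (1/(p-1)) * real n powr (p/(p-1))"
    using 2 by (intro mult_right_mono) auto
  finally show ?thesis unfolding S_def T_def .
qed

lemma mult_div_powr_conj_exponent:
  fixes w x p :: real
  assumes "0 < w" "0 \<le> x" "1 < p"
  shows "w * (x / w) powr (p/(p-1)) = w powr (-1/(p-1)) * x powr (p/(p-1))"
proof -
  have "w * (x / w) powr (p/(p-1)) = x powr (p/(p-1)) * (w powr 1 / w powr (p/(p-1)))"
    using assms by (simp add: powr_divide)
  also have "w powr 1 / w powr (p/(p-1)) = w powr (1 - p/(p-1))" using assms by (simp add: powr_diff)
  also have "1 - p/(p-1) = -1/(p-1)" using assms by (simp add: field_simps)
  finally show ?thesis by simp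
qed

definition lq_sum :: "(nat \<Rightarrow> real) \<Rightarrow> real \<Rightarrow> (nat \<Rightarrow> real) \<Rightarrow> real" where
  "lq_sum v q f = (\<Sum>k. v (Suc k) * \<bar>f (Suc k)\<bar> powr q)"

lemma lq_norm_eq_lq_sum: "lq_norm v q f = lq_sum v q f powr (1/q)"
  unfolding lq_norm_def lq_sum_def ..

lemma
  assumes f: "in_lq v q f" and t: "0 < t"
  shows in_lq_divide: "in_lq v q (\<lambda>j. f j / t)"
    and lq_sum_divide: "lq_sum v q (\<lambda>j. f j / t) = lq_sum v q f / t powr q"
proof -
  have e: "v (Suc k) * \<bar>f (Suc k) / t\<bar> powr q = v (Suc k) * \<bar>f (Suc k)\<bar> powr q / t powr q" for k
    using t by (simp add: powr_divide)
  show "in_lq v q (\<lambda>j. f j / t)" using f unfolding in_lq_def e by (rule summable_divide)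
  show "lq_sum v q (\<lambda>j. f j / t) = lq_sum v q f / t powr q"
    unfolding lq_sum_def e using f unfolding in_lq_def by (rule suminf_divide)
qed

lemma lq_sum_nonneg:
  assumes v: "weight v" and f: "in_lq v q f"
  shows "0 \<le> lq_sum v q f"
  using f v unfolding lq_sum_def in_lq_def weight_def
  by (intro suminf_nonneg mult_nonneg_nonneg) (auto simp: less_imp_le)

lemma lq_sum_term_le:
  assumes v: "weight v" and f: "in_lq v q f" and k: "1 \<le> k"
  shows "v k * \<bar>f k\<bar> powr q \<le> lq_sum v q f"
proof -
  obtain i where i: "k = Suc i" using k by (cases k) auto
  have "(\<Sum>j\<in>{i}. v (Suc j) * \<bar>f (Suc j)\<bar> powr q) \<le> lq_sum v q f"
    unfolding lq_sum_def using f v unfolding in_lq_def weight_def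
    by (intro sum_le_suminf ballI mult_nonneg_nonneg) (auto simp: less_imp_le)
  then show ?thesis using i by simp
qed

lemma lq_sum_pos:
  assumes v: "weight v" and f: "in_lq v q f" and k: "1 \<le> k" "f k \<noteq> 0"
  shows "0 < lq_sum v q f"
proof -
  have "0 < v k * \<bar>f k\<bar> powr q" using v k unfolding weight_def by simp
  also have "\<dots> \<le> lq_sum v q f" using lq_sum_term_le[OF v f k(1)] .
  finally show ?thesis .
qed

lemma Mprime_eq_SUP:
  assumes "1 \<le> k"
  shows "Mprime w f k = (SUP n\<in>{k..}. avg (\<lambda>j. \<bar>w j * f j\<bar>) n) / w k"
  using assms unfolding Mprime_def maxop_def by (simp add: max_def)

lemma cSUP_divide_const:
  fixes f :: "'a \<Rightarrow> real"
  assumes t: "0 < t" and A: "A \<noteq> {}" and b: "bdd_above (f ` A)"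
  shows "(SUP x\<in>A. f x / t) = (SUP x\<in>A. f x) / t"
proof (rule antisym)
  show "(SUP x\<in>A. f x / t) \<le> (SUP x\<in>A. f x) / t"
    using A b t by (intro cSUP_least divide_right_mono cSUP_upper) auto
  obtain M where "\<And>x. x \<in> A \<Longrightarrow> f x \<le> M" using b by (auto simp: bdd_above_def)
  then have b2: "bdd_above ((\<lambda>x. f x / t) ` A)"
    using t by (intro bdd_aboveI2[of _ _ "M / t"]) (simp add: divide_right_mono)
  have "(SUP x\<in>A. f x) \<le> t * (SUP x\<in>A. f x / t)"
  proof (rule cSUP_least[OF A])
    fix x assume x: "x \<in> A"
    have "f x / t \<le> (SUP x\<in>A. f x / t)" using x b2 by (intro cSUP_upper)
    then show "f x \<le> t * (SUP x\<in>A. f x / t)" using t by (simp add: field_simps)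
  qed
  then show "(SUP x\<in>A. f x) / t \<le> (SUP x\<in>A. f x / t)" using t by (simp add: field_simps)
qed

lemma Mprime_divide:
  assumes t: "0 < t" and k: "1 \<le> k" and b: "bdd_above (avg (\<lambda>j. \<bar>w j * f j\<bar>) ` {k..})"
  shows "Mprime w (\<lambda>j. f j / t) k = Mprime w f k / t"
proof -
  have e: "avg (\<lambda>j. \<bar>w j * (f j / t)\<bar>) n = avg (\<lambda>j. \<bar>w j * f j\<bar>) n / t" for n
    unfolding avg_def using t by (simp add: abs_mult sum_divide_distrib[symmetric])
  have "(SUP n\<in>{k..}. avg (\<lambda>j. \<bar>w j * (f j / t)\<bar>) n) = (SUP n\<in>{k..}. avg (\<lambda>j. \<bar>w j * f j\<bar>) n) / t"
    unfolding e using t b by (intro cSUP_divide_const) auto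
  then show ?thesis unfolding Mprime_eq_SUP[OF k] by simp
qed

locale Ap_weight =
  fixes p :: real and w :: "nat \<Rightarrow> real"
  assumes p: "1 < p" and weight: "weight w" and Ap: "in_Ap p w"
begin

abbreviation "q \<equiv> p/(p-1)"
abbreviation "\<sigma> j \<equiv> w j powr (-1/(p-1))"
abbreviation "M_norm \<equiv> op_norm (Mprime w) w q"

lemma w_pos: "1 \<le> k \<Longrightarrow> 0 < w k"
  using weight unfolding weight_def by auto

lemma q_gt_1: "1 < q"
  using p by simp

sublocale dual: Aq_pair q "Ap_const p w powr (1/(p-1))" \<sigma> w
proof
  show "1 < q" by (rule q_gt_1)
  show "0 < \<sigma> j" "0 < w j" if "1 \<le> j" for j using w_pos[OF that] by auto
  fix j :: nat assume j: "1 \<le> j"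
  have "\<sigma> j powr (1/q) * w j powr (1 - 1/q) = w j powr ((-1/(p-1)) * (1/q)) * w j powr (1 - 1/q)"
    by (simp add: powr_powr)
  also have "\<dots> = w j powr ((-1/(p-1)) * (1/q) + (1 - 1/q))" by (rule powr_add[symmetric])
  also have "(-1/(p-1)) * (1/q) + (1 - 1/q) = 0" using p by (simp add: field_simps)
  finally show "\<sigma> j powr (1/q) * w j powr (1 - 1/q) = 1" using w_pos[OF j] by simp
next
  fix n :: nat assume "1 \<le> n"
  then show "(\<Sum>j=1..n. \<sigma> j) * (\<Sum>j=1..n. w j) powr (q - 1) \<le> Ap_const p w powr (1/(p-1)) * real n powr q"
    using Ap_dual_condition[OF p weight Ap] by simp
qed

text \<open>With \<open>g = \<bar>w f\<bar>\<close>, boundedness of \<open>Mprime w\<close> on \<open>l\<^sup>q(w)\<close> is boundedness of the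
  maximal operator on \<open>l\<^sup>q(\<sigma>)\<close>.\<close>
lemma abs_mult_powr_sigma: "1 \<le> k \<Longrightarrow> \<bar>w k * f k\<bar> powr q * \<sigma> k = w k * \<bar>f k\<bar> powr q"
  using mult_div_powr_conj_exponent[of "w k" "\<bar>w k * f k\<bar>" p] w_pos[of k] p
  by (simp add: abs_mult ac_simps)

lemma summable_abs_mult_powr_sigma:
  assumes "in_lq w q f"
  shows "summable (\<lambda>i. \<bar>w (Suc i) * f (Suc i)\<bar> powr q * \<sigma> (Suc i))"
proof -
  have "\<bar>w (Suc i) * f (Suc i)\<bar> powr q * \<sigma> (Suc i) = w (Suc i) * \<bar>f (Suc i)\<bar> powr q" for i
    by (rule abs_mult_powr_sigma) simp
  then show ?thesis using assms unfolding in_lq_def by simp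
qed

lemma averages_bdd_above:
  assumes "in_lq w q f" "1 \<le> k"
  shows "bdd_above (avg (\<lambda>j. \<bar>w j * f j\<bar>) ` {k..})"
  by (rule dual.sup_avg_bdd_above[OF _ summable_abs_mult_powr_sigma[OF assms(1)] assms(2)]) simp

lemma Mprime_powr_eq:
  assumes f: "in_lq w q f" and k: "1 \<le> k"
  shows "w k * \<bar>Mprime w f k\<bar> powr q = \<sigma> k * (SUP n\<in>{k..}. avg (\<lambda>j. \<bar>w j * f j\<bar>) n) powr q"
proof -
  have "0 \<le> avg (\<lambda>j. \<bar>w j * f j\<bar>) k" by (intro avg_nonneg) simp
  also have "\<dots> \<le> (SUP n\<in>{k..}. avg (\<lambda>j. \<bar>w j * f j\<bar>) n)"
    using averages_bdd_above[OF f k] by (intro cSUP_upper) auto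
  finally have "0 \<le> (SUP n\<in>{k..}. avg (\<lambda>j. \<bar>w j * f j\<bar>) n)" .
  then show ?thesis
    unfolding Mprime_eq_SUP[OF k] using mult_div_powr_conj_exponent[OF w_pos[OF k] _ p] w_pos[OF k]
    by simp
qed

lemma Mprime_in_lq:
  assumes "in_lq w q f"
  shows "in_lq w q (Mprime w f)"
proof -
  have "w (Suc i) * \<bar>Mprime w f (Suc i)\<bar> powr q
      = \<sigma> (Suc i) * (SUP n\<in>{Suc i..}. avg (\<lambda>j. \<bar>w j * f j\<bar>) n) powr q" for i
    by (rule Mprime_powr_eq[OF assms]) simp
  then show ?thesis
    unfolding in_lq_def using dual.sup_avg_summable[OF _ summable_abs_mult_powr_sigma[OF assms]] by simp
qed

lemma Mprime_bounded:
  obtains C where "0 \<le> C" and "\<And>f. in_lq w q f \<Longrightarrow> lq_sum w q (Mprime w f) \<le> C * lq_sum w q f"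
proof -
  obtain C where "0 \<le> C"
    and C: "\<And>g. (\<And>j. 1 \<le> j \<Longrightarrow> 0 \<le> g j) \<Longrightarrow> summable (\<lambda>i. g (Suc i) powr q * \<sigma> (Suc i)) \<Longrightarrow>
       (\<Sum>i. \<sigma> (Suc i) * (SUP n\<in>{Suc i..}. avg g n) powr q) \<le> C * (\<Sum>i. g (Suc i) powr q * \<sigma> (Suc i))"
    by (rule dual.maximal_inequality_bound) blast
  moreover have "lq_sum w q (Mprime w f) \<le> C * lq_sum w q f" if f: "in_lq w q f" for f
  proof -
    have "w (Suc i) * \<bar>Mprime w f (Suc i)\<bar> powr q
        = \<sigma> (Suc i) * (SUP n\<in>{Suc i..}. avg (\<lambda>j. \<bar>w j * f j\<bar>) n) powr q" for i
      by (rule Mprime_powr_eq[OF f]) simp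
    moreover have "\<bar>w (Suc i) * f (Suc i)\<bar> powr q * \<sigma> (Suc i) = w (Suc i) * \<bar>f (Suc i)\<bar> powr q" for i
      by (rule abs_mult_powr_sigma) simp
    ultimately show ?thesis
      using C[OF _ summable_abs_mult_powr_sigma[OF f]] unfolding lq_sum_def by simp
  qed
  ultimately show ?thesis using that by blast
qed

lemma lq_norm_Mprime_le_M_norm:
  assumes f: "in_lq w q f" and f1: "lq_norm w q f \<le> 1"
  shows "lq_norm w q (Mprime w f) \<le> M_norm"
  unfolding op_norm_def
proof (rule cSup_upper)
  show "lq_norm w q (Mprime w f) \<in> {lq_norm w q (Mprime w f) |f. in_lq w q f \<and> lq_norm w q f \<le> 1}"
    using f f1 by blast
  obtain C where C0: "0 \<le> C" and C: "\<And>f. in_lq w q f \<Longrightarrow> lq_sum w q (Mprime w f) \<le> C * lq_sum w q f"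
    by (rule Mprime_bounded) blast
  have "lq_norm w q (Mprime w g) \<le> C powr (1/q)" if g: "in_lq w q g" "lq_norm w q g \<le> 1" for g
  proof -
    have "lq_norm w q (Mprime w g) \<le> (C * lq_sum w q g) powr (1/q)"
      unfolding lq_norm_eq_lq_sum using C[OF g(1)] p lq_sum_nonneg[OF weight Mprime_in_lq[OF g(1)]]
      by (intro powr_mono2) auto
    also have "\<dots> = C powr (1/q) * lq_norm w q g"
      using C0 lq_sum_nonneg[OF weight g(1)] by (simp add: powr_mult lq_norm_eq_lq_sum)
    also have "\<dots> \<le> C powr (1/q)" using g(2) by (simp add: mult_left_le)
    finally show ?thesis .
  qed
  then show "bdd_above {lq_norm w q (Mprime w f) |f. in_lq w q f \<and> lq_norm w q f \<le> 1}"
    by (intro bdd_aboveI[of _ "C powr (1/q)"]) blast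
qed

lemma M_norm_nonneg: "0 \<le> M_norm"
proof -
  have "in_lq w q (\<lambda>_. 0)" "lq_norm w q (\<lambda>_. 0) \<le> 1"
    unfolding in_lq_def lq_norm_def using q_gt_1 by auto
  then have "lq_norm w q (Mprime w (\<lambda>_. 0)) \<le> M_norm" by (rule lq_norm_Mprime_le_M_norm)
  then show ?thesis unfolding lq_norm_def by (meson order_trans powr_ge_zero)
qed

lemma Mprime_pos:
  assumes f: "in_lq w q f" and fp: "\<forall>k\<ge>1. f k > 0" and k: "1 \<le> k"
  shows "0 < Mprime w f k"
proof -
  have "0 < avg (\<lambda>j. \<bar>w j * f j\<bar>) k"
    unfolding avg_def using k fp w_pos by (intro divide_pos_pos sum_pos) (auto simp: less_imp_neq[symmetric])
  also have "\<dots> \<le> (SUP n\<in>{k..}. avg (\<lambda>j. \<bar>w j * f j\<bar>) n)"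
    using averages_bdd_above[OF f k] by (intro cSUP_upper) auto
  finally show ?thesis unfolding Mprime_eq_SUP[OF k] using w_pos[OF k] by simp
qed

text \<open>Homogeneity: normalise \<open>f\<close> to norm \<open>1\<close> and compare with the operator norm.\<close>
lemma lq_sum_Mprime_le:
  assumes f: "in_lq w q f" and fp: "\<forall>k\<ge>1. f k > 0"
  shows "lq_sum w q (Mprime w f) \<le> M_norm powr q * lq_sum w q f"
proof -
  define t where "t = lq_sum w q f powr (1/q)"
  have Qp: "0 < lq_sum w q f" using lq_sum_pos[OF weight f order_refl] fp by auto
  have tp: "0 < t" unfolding t_def using Qp by simp
  have tq: "t powr q = lq_sum w q f" unfolding t_def using Qp q_gt_1 by (intro powr_inverse_powr) auto
  define f' where "f' j = f j / t" for j
  have f'l: "in_lq w q f'" unfolding f'_def by (rule in_lq_divide[OF f tp])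
  have "lq_sum w q f' = 1" unfolding f'_def lq_sum_divide[OF f tp] tq using Qp by simp
  then have "lq_norm w q f' \<le> 1" unfolding lq_norm_eq_lq_sum by simp
  then have le: "lq_norm w q (Mprime w f') \<le> M_norm" by (rule lq_norm_Mprime_le_M_norm[OF f'l])
  have "lq_sum w q (Mprime w f') = lq_sum w q (\<lambda>k. Mprime w f k / t)"
    unfolding lq_sum_def f'_def using Mprime_divide[OF tp _ averages_bdd_above[OF f]] by simp
  also have "\<dots> = lq_sum w q (Mprime w f) / lq_sum w q f"
    using lq_sum_divide[OF Mprime_in_lq[OF f] tp] tq by simp
  finally have e: "lq_sum w q (Mprime w f') = lq_sum w q (Mprime w f) / lq_sum w q f" .
  have x0: "0 \<le> lq_sum w q (Mprime w f) / lq_sum w q f"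
    using lq_sum_nonneg[OF weight Mprime_in_lq[OF f]] Qp by simp
  have "lq_sum w q (Mprime w f) / lq_sum w q f
      = ((lq_sum w q (Mprime w f) / lq_sum w q f) powr (1/q)) powr q"
    using x0 q_gt_1 by (intro powr_inverse_powr[symmetric]) auto
  also have "\<dots> \<le> M_norm powr q"
    using le q_gt_1 unfolding lq_norm_eq_lq_sum e by (intro powr_mono2) auto
  finally show ?thesis using Qp by (simp add: field_simps)
qed

end

section \<open>The Rubio de Francia construction\<close>

lemma (in Ap_weight) avg_le_Mprime:
  assumes f: "in_lq w q f" and k: "1 \<le> k" "k \<le> n"
  shows "avg (\<lambda>j. \<bar>w j * f j\<bar>) n \<le> w k * Mprime w f k"
proof -
  have "avg (\<lambda>j. \<bar>w j * f j\<bar>) n \<le> (SUP m\<in>{k..}. avg (\<lambda>j. \<bar>w j * f j\<bar>) m)"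
    using averages_bdd_above[OF f k(1)] k by (intro cSUP_upper) auto
  then show ?thesis unfolding Mprime_eq_SUP[OF k(1)] using w_pos[OF k(1)] by simp
qed

locale Rubio_de_Francia = Ap_weight +
  fixes h :: "nat \<Rightarrow> real"
  assumes h_in_lq: "in_lq w q h" and h_pos: "\<forall>k\<ge>1. h k > 0"
begin

abbreviation "H s \<equiv> (Mprime w ^^ s) h"

lemma Mprime_iterate:
  "in_lq w q (H s) \<and> (\<forall>k\<ge>1. H s k > 0) \<and> lq_sum w q (H s) \<le> (M_norm ^ s) powr q * lq_sum w q h"
proof (induction s)
  case 0 then show ?case using h_in_lq h_pos lq_sum_nonneg[OF weight h_in_lq] by simp
next
  case (Suc s)
  then have IH: "in_lq w q (H s)" "\<forall>k\<ge>1. H s k > 0" "lq_sum w q (H s) \<le> (M_norm ^ s) powr q * lq_sum w q h"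
    by auto
  have "lq_sum w q (H (Suc s)) \<le> M_norm powr q * lq_sum w q (H s)"
    using lq_sum_Mprime_le[OF IH(1,2)] by simp
  also have "\<dots> \<le> M_norm powr q * ((M_norm ^ s) powr q * lq_sum w q h)"
    using IH(3) by (intro mult_left_mono) auto
  also have "\<dots> = (M_norm ^ Suc s) powr q * lq_sum w q h"
    by (simp add: powr_mult)
  finally show ?case using Mprime_in_lq[OF IH(1)] Mprime_pos[OF IH(1,2)] by simp
qed

lemma H_pos: "1 \<le> k \<Longrightarrow> 0 < H s k"
  using Mprime_iterate by auto

lemma M_norm_pos: "0 < M_norm"
proof -
  have "0 < lq_sum w q (Mprime w h)"
    using lq_sum_pos[OF weight Mprime_in_lq[OF h_in_lq] order_refl] Mprime_pos[OF h_in_lq h_pos order_refl]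
    by simp
  also have "\<dots> \<le> M_norm powr q * lq_sum w q h" by (rule lq_sum_Mprime_le[OF h_in_lq h_pos])
  finally have "M_norm \<noteq> 0" by auto
  then show ?thesis using M_norm_nonneg by simp
qed

lemma H_pointwise_le:
  assumes k: "1 \<le> k"
  shows "H s k \<le> M_norm ^ s * (lq_sum w q h / w k) powr (1/q)"
proof -
  have "w k * \<bar>H s k\<bar> powr q \<le> lq_sum w q (H s)"
    using Mprime_iterate by (intro lq_sum_term_le[OF weight _ k]) simp
  then have "w k * H s k powr q \<le> lq_sum w q (H s)" using abs_of_pos[OF H_pos[OF k]] by simp
  also have "\<dots> \<le> (M_norm ^ s) powr q * lq_sum w q h" using Mprime_iterate by simp
  finally have "H s k powr q \<le> (M_norm ^ s) powr q * (lq_sum w q h / w k)"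
    using w_pos[OF k] by (simp add: field_simps)
  then have "H s k \<le> ((M_norm ^ s) powr q * (lq_sum w q h / w k)) powr (1/q)"
    by (rule le_powr_inverse_of_powr_le[OF less_imp_le[OF H_pos[OF k]]]) (use p in simp)
  also have "\<dots> = ((M_norm ^ s) powr q) powr (1/q) * (lq_sum w q h / w k) powr (1/q)"
    by (rule powr_mult)
  also have "((M_norm ^ s) powr q) powr (1/q) = M_norm ^ s"
    using M_norm_nonneg q_gt_1 by (intro powr_powr_inverse) auto
  finally show ?thesis .
qed

abbreviation "N_term s j \<equiv> H s j / (2 ^ s * M_norm ^ s)"

lemma N_term_summable:
  assumes k: "1 \<le> k"
  shows "summable (\<lambda>s. N_term s k)"
proof (rule summable_comparison_test'[of "\<lambda>s. (lq_sum w q h / w k) powr (1/q) * (1/2) ^ s" 0])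
  show "summable (\<lambda>s. (lq_sum w q h / w k) powr (1/q) * (1/2) ^ s)"
    by (intro summable_mult summable_geometric) simp
  fix s :: nat
  have "N_term s k \<le> M_norm ^ s * (lq_sum w q h / w k) powr (1/q) / (2 ^ s * M_norm ^ s)"
    using H_pointwise_le[OF k] M_norm_pos by (intro divide_right_mono) auto
  also have "\<dots> = (lq_sum w q h / w k) powr (1/q) * (1/2) ^ s"
    using M_norm_pos by (simp add: power_one_over field_simps)
  finally show "norm (N_term s k) \<le> (lq_sum w q h / w k) powr (1/q) * (1/2) ^ s"
    using M_norm_pos by (simp add: abs_of_pos[OF H_pos[OF k]])
qed

lemma N_term_Suc_summable: "1 \<le> k \<Longrightarrow> summable (\<lambda>s. N_term (Suc s) k)"
  by (subst summable_Suc_iff) (rule N_term_summable)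

lemma Nprime_eq_h_plus: "1 \<le> k \<Longrightarrow> Nprime p w h k = h k + (\<Sum>s. N_term (Suc s) k)"
  unfolding Nprime_def using suminf_split_head[OF N_term_summable] by simp

lemma Nprime_ge:
  assumes k: "1 \<le> k"
  shows "h k \<le> Nprime p w h k"
proof -
  have "0 \<le> (\<Sum>s. N_term (Suc s) k)"
    using M_norm_pos
    by (intro suminf_nonneg[OF N_term_Suc_summable[OF k]] divide_nonneg_pos less_imp_le[OF H_pos[OF k]]) simp
  then show ?thesis using Nprime_eq_h_plus[OF k] by simp
qed

lemma Nprime_pos: "1 \<le> k \<Longrightarrow> 0 < Nprime p w h k"
  using Nprime_ge[of k] h_pos by fastforce

lemma sum_N_term_mult_le:
  assumes k: "1 \<le> k" and kn: "k \<le> n"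
  shows "(\<Sum>j=1..n. w j * N_term s j) \<le> real n * w k * (2 * M_norm) * N_term (Suc s) k"
proof -
  have "(\<Sum>j=1..n. w j * N_term s j) = (\<Sum>j=1..n. \<bar>w j * H s j\<bar>) / (2 ^ s * M_norm ^ s)"
    unfolding sum_divide_distrib
  proof (intro sum.cong refl)
    fix j assume "j \<in> {1..n}"
    then have "0 < w j" "0 < H s j" using w_pos H_pos by auto
    then show "w j * N_term s j = \<bar>w j * H s j\<bar> / (2 ^ s * M_norm ^ s)" by simp
  qed
  also have "\<dots> = real n * avg (\<lambda>j. \<bar>w j * H s j\<bar>) n / (2 ^ s * M_norm ^ s)"
    unfolding avg_def using k kn by simp
  also have "\<dots> \<le> real n * (w k * H (Suc s) k) / (2 ^ s * M_norm ^ s)"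
    using avg_le_Mprime[OF Mprime_iterate[THEN conjunct1] k kn] M_norm_pos
    by (intro divide_right_mono mult_left_mono) auto
  also have "\<dots> = real n * w k * (2 * M_norm) * N_term (Suc s) k"
    using M_norm_pos by (simp add: field_simps)
  finally show ?thesis .
qed

lemma Nprime_mult_eq_suminf:
  assumes "1 \<le> j"
  shows "\<bar>Nprime p w h j * w j\<bar> = (\<Sum>s. w j * N_term s j)"
proof -
  have "\<bar>Nprime p w h j * w j\<bar> = w j * Nprime p w h j"
    using Nprime_pos[OF assms] w_pos[OF assms] by simp
  also have "\<dots> = (\<Sum>s. w j * N_term s j)"
    unfolding Nprime_def using N_term_summable[OF assms] by (rule suminf_mult[symmetric])
  finally show ?thesis .
qed

text \<open>\<open>Mprime w\<close> shifts the series defining \<open>Nprime\<close> by one index, at the cost of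
  the factor \<open>2 * M_norm\<close>.\<close>
lemma avg_Nprime_mult_le:
  assumes k: "1 \<le> k" and kn: "k \<le> n"
  shows "avg (\<lambda>j. \<bar>Nprime p w h j * w j\<bar>) n \<le> 2 * M_norm * (Nprime p w h k * w k)"
proof -
  note sS = N_term_Suc_summable[OF k]
  have sj: "summable (\<lambda>s. w j * N_term s j)" if "j \<in> {1..n}" for j
    using N_term_summable[of j] that by (intro summable_mult) auto
  have "(\<Sum>j=1..n. \<bar>Nprime p w h j * w j\<bar>) = (\<Sum>j=1..n. \<Sum>s. w j * N_term s j)"
    using Nprime_mult_eq_suminf by (intro sum.cong) auto
  also have "\<dots> = (\<Sum>s. \<Sum>j=1..n. w j * N_term s j)"
    using sj by (intro suminf_sum[symmetric]) auto
  also have "\<dots> \<le> (\<Sum>s. real n * w k * (2 * M_norm) * N_term (Suc s) k)"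
  proof (rule suminf_le)
    show "summable (\<lambda>s. \<Sum>j=1..n. w j * N_term s j)" using sj by (intro summable_sum) auto
    show "summable (\<lambda>s. real n * w k * (2 * M_norm) * N_term (Suc s) k)"
      using sS by (rule summable_mult)
  qed (rule sum_N_term_mult_le[OF k kn])
  also have "\<dots> = real n * w k * (2 * M_norm) * (Nprime p w h k - h k)"
    by (subst suminf_mult[OF sS]) (simp add: Nprime_eq_h_plus[OF k])
  also have "\<dots> \<le> real n * w k * (2 * M_norm) * Nprime p w h k"
    using h_pos k w_pos[OF k] M_norm_pos by (intro mult_left_mono) auto
  finally show ?thesis unfolding avg_def using k kn by (simp add: field_simps)
qed

lemma in_A1_Nprime_mult: "in_A1 (\<lambda>k. Nprime p w h k * w k)"
  unfolding in_A1_def A1_bounds_def using avg_Nprime_mult_le by blast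

end

section \<open>Factorization\<close>

lemma avg_le_A1_const:
  assumes A1: "in_A1 u" and u: "\<And>k. 1 \<le> k \<Longrightarrow> 0 < u k" and k: "1 \<le> k" "k \<le> n"
  shows "avg (\<lambda>j. \<bar>u j\<bar>) n \<le> A1_const u * u k"
proof -
  have "avg (\<lambda>j. \<bar>u j\<bar>) n / u k \<le> A1_const u"
    unfolding A1_const_def
  proof (rule cInf_greatest)
    show "A1_bounds u \<noteq> {}" using A1 unfolding in_A1_def .
    fix C assume "C \<in> A1_bounds u"
    then have "avg (\<lambda>j. \<bar>u j\<bar>) n \<le> C * u k" using k unfolding A1_bounds_def by auto
    then show "avg (\<lambda>j. \<bar>u j\<bar>) n / u k \<le> C" using u[OF k(1)] by (simp add: divide_le_eq)
  qed
  then show ?thesis using u[OF k(1)] by (simp add: divide_le_eq)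
qed

lemma A1_const_ge_1:
  assumes "in_A1 u" "\<And>k. 1 \<le> k \<Longrightarrow> 0 < u k"
  shows "1 \<le> A1_const u"
  using avg_le_A1_const[OF assms order_refl order_refl] assms(2)[of 1] by (simp add: avg_def)

lemma Ap_char_nonneg:
  assumes "\<And>k. 1 \<le> k \<Longrightarrow> 0 \<le> w k"
  shows "0 \<le> Ap_char q w n"
  unfolding Ap_char_def avg_def using assms by (intro mult_nonneg_nonneg divide_nonneg_nonneg sum_nonneg) auto

lemma in_Ap_and_Ap_const_le:
  assumes "\<And>n. 1 \<le> n \<Longrightarrow> Ap_char q w n \<le> B"
  shows "in_Ap q w \<and> Ap_const q w \<le> B"
  unfolding in_Ap_def Ap_const_def using assms by (auto intro!: bdd_aboveI2 cSUP_least)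

lemma sum_mult_powr_le_Holder:
  fixes a :: real
  assumes a: "0 < a" "a < 1" and A: "finite A" and w: "\<And>k. k \<in> A \<Longrightarrow> 0 < w k"
    and N: "\<And>k. k \<in> A \<Longrightarrow> 0 \<le> N k"
  shows "(\<Sum>k\<in>A. w k * N k powr a) \<le> (\<Sum>k\<in>A. w k) powr (1 - a) * (\<Sum>k\<in>A. N k * w k) powr a"
proof -
  have "w k * N k powr a = w k powr (1 - a) * (N k * w k) powr (1 - (1 - a))" if "k \<in> A" for k
  proof -
    have "w k powr (1 - a) * (N k * w k) powr a = (w k powr (1 - a) * w k powr a) * N k powr a"
      by (simp add: powr_mult)
    also have "w k powr (1 - a) * w k powr a = w k" using w[OF that] by (simp flip: powr_add)
    finally show ?thesis by simp
  qed
  then have "(\<Sum>k\<in>A. w k * N k powr a) = (\<Sum>k\<in>A. w k powr (1 - a) * (N k * w k) powr (1 - (1 - a)))"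
    by (rule sum.cong[OF refl])
  also have "\<dots> \<le> (\<Sum>k\<in>A. w k) powr (1 - a) * (\<Sum>k\<in>A. N k * w k) powr (1 - (1 - a))"
    using a A w N by (intro Holder_inequality_sum) (auto intro!: mult_nonneg_nonneg intro: less_imp_le)
  finally show ?thesis by simp
qed

text \<open>The dual half of the factorization: the \<open>A\<^sub>1\<close> condition bounds \<open>N * w\<close> from below
  on \<open>{1..n}\<close> by its average, which removes \<open>N\<close> from the dual weight.\<close>
lemma avg_dual_weight_powr_le:
  fixes p0 p C0 :: real and w N :: "nat \<Rightarrow> real" and n :: nat
  defines "a \<equiv> (p - p0)/(p - 1)"
  assumes p0: "1 < p0" "p0 < p" and n: "1 \<le> n" and w: "\<And>k. 1 \<le> k \<Longrightarrow> 0 < w k"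
    and N: "\<And>k. 1 \<le> k \<Longrightarrow> 0 < N k" and C0: "0 < C0"
    and A1: "\<And>k. 1 \<le> k \<Longrightarrow> k \<le> n \<Longrightarrow> avg (\<lambda>j. \<bar>N j * w j\<bar>) n \<le> C0 * (N k * w k)"
  shows "avg (\<lambda>k. (w k * N k powr a) powr (-1/(p0-1))) n powr (p0 - 1)
    \<le> (C0 / avg (\<lambda>j. N j * w j) n) powr a * avg (\<lambda>k. w k powr (-1/(p-1))) n powr (p0 - 1)"
proof -
  define e where "e = a / (p0 - 1)"
  define m where "m = avg (\<lambda>j. N j * w j) n"
  have e0: "0 < e" unfolding e_def a_def using p0 by simp
  have m_pos: "0 < m" unfolding m_def avg_def using w N n by (intro divide_pos_pos sum_pos) auto
  have m_le: "m \<le> C0 * (N k * w k)" if "1 \<le> k" "k \<le> n" for k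
    using A1[OF that] w N unfolding m_def avg_def by (simp add: abs_mult less_imp_le)
  have "e = 1/(p0-1) - 1/(p-1)" unfolding e_def a_def using p0 by (simp add: field_simps)
  then have exponent: "-1/(p0-1) = -1/(p-1) + (-e)" by simp
  have "(w k * N k powr a) powr (-1/(p0-1)) \<le> (C0 / m) powr e * w k powr (-1/(p-1))"
    if k: "1 \<le> k" "k \<le> n" for k
  proof -
    have "(w k * N k powr a) powr (-1/(p0-1)) = w k powr (-1/(p0-1)) * N k powr (-e)"
      unfolding e_def by (simp add: powr_mult powr_powr)
    also have "w k powr (-1/(p0-1)) = w k powr (-1/(p-1)) * w k powr (-e)"
      by (subst exponent) (rule powr_add)
    also have "w k powr (-1/(p-1)) * w k powr (-e) * N k powr (-e) = w k powr (-1/(p-1)) * (N k * w k) powr (-e)"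
      by (simp add: powr_mult)
    also have "(N k * w k) powr (-e) \<le> (m / C0) powr (-e)"
      using m_le[OF k] m_pos C0 e0 by (intro powr_mono2') (auto simp: field_simps)
    also have "(m / C0) powr (-e) = (C0 / m) powr e"
      using m_pos C0 by (simp add: powr_minus_divide powr_divide)
    finally show ?thesis using w[OF k(1)] by (simp add: mult.commute)
  qed
  then have "avg (\<lambda>k. (w k * N k powr a) powr (-1/(p0-1))) n \<le> (C0 / m) powr e * avg (\<lambda>k. w k powr (-1/(p-1))) n"
    unfolding avg_def using n by (auto simp: sum_distrib_left sum_divide_distrib intro!: sum_mono divide_right_mono)
  then have "avg (\<lambda>k. (w k * N k powr a) powr (-1/(p0-1))) n powr (p0 - 1)
      \<le> ((C0 / m) powr e * avg (\<lambda>k. w k powr (-1/(p-1))) n) powr (p0 - 1)"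
    using p0 by (intro powr_mono2) (auto simp: avg_def intro!: divide_nonneg_nonneg sum_nonneg)
  also have "\<dots> = ((C0 / m) powr e) powr (p0 - 1) * avg (\<lambda>k. w k powr (-1/(p-1))) n powr (p0 - 1)"
    by (rule powr_mult)
  also have "((C0 / m) powr e) powr (p0 - 1) = (C0 / m) powr a"
    unfolding e_def using p0 by (simp add: powr_powr)
  finally show ?thesis unfolding m_def .
qed

text \<open>\<open>A\<^sub>1\<close>--\<open>A\<^sub>p\<close> factorization on \<open>{1..n}\<close>: \<open>w N\<^sup>a = w\<^sup>b (N w)\<^sup>a\<close> with
  \<open>a + b = 1\<close>; Hoelder's inequality handles the average of the weight, the \<open>A\<^sub>1\<close>
  condition the average of the dual weight.\<close>
lemma Ap_char_factorization:
  fixes p0 p C0 :: real and w N :: "nat \<Rightarrow> real" and n :: nat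
  assumes p0: "1 < p0" "p0 < p" and n: "1 \<le> n" and w: "\<And>k. 1 \<le> k \<Longrightarrow> 0 < w k"
    and N: "\<And>k. 1 \<le> k \<Longrightarrow> 0 < N k" and C0: "0 < C0"
    and A1: "\<And>k. 1 \<le> k \<Longrightarrow> k \<le> n \<Longrightarrow> avg (\<lambda>j. \<bar>N j * w j\<bar>) n \<le> C0 * (N k * w k)"
  shows "Ap_char p0 (\<lambda>k. w k * N k powr ((p - p0)/(p - 1))) n
     \<le> C0 powr ((p - p0)/(p - 1)) * Ap_char p w n powr ((p0 - 1)/(p - 1))"
proof -
  define a where "a = (p - p0)/(p - 1)"
  define b where "b = (p0 - 1)/(p - 1)"
  have ab: "0 < a" "a < 1" "b = 1 - a" unfolding a_def b_def using p0 by (auto simp: field_simps)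
  define m where "m = avg (\<lambda>j. N j * w j) n"
  define \<sigma> where "\<sigma> k = w k powr (-1/(p-1))" for k
  have m_pos: "0 < m" unfolding m_def avg_def using w N n by (intro divide_pos_pos sum_pos) auto
  have np: "0 < real n" using n by simp
  have avg_v: "avg (\<lambda>k. w k * N k powr a) n \<le> avg w n powr b * m powr a"
  proof -
    have "avg (\<lambda>k. w k * N k powr a) n
        \<le> (\<Sum>k=1..n. w k) powr b * (\<Sum>k=1..n. N k * w k) powr a / real n"
      unfolding avg_def ab(3) using ab w N np
      by (intro divide_right_mono sum_mult_powr_le_Holder) (auto intro: less_imp_le)
    also have "real n = real n powr b * real n powr a" using ab np by (simp flip: powr_add)
    also have "(\<Sum>k=1..n. w k) powr b * (\<Sum>k=1..n. N k * w k) powr a / (real n powr b * real n powr a)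
        = avg w n powr b * m powr a"
      unfolding avg_def m_def using w N
      by (simp add: powr_divide sum_nonneg less_imp_le)
    finally show ?thesis .
  qed
  have "Ap_char p0 (\<lambda>k. w k * N k powr a) n
      \<le> (avg w n powr b * m powr a) * ((C0 / m) powr a * avg \<sigma> n powr (p0 - 1))"
    unfolding Ap_char_def m_def \<sigma>_def a_def
    using avg_v avg_dual_weight_powr_le[OF p0 n w N C0 A1]
    by (intro mult_mono) (auto simp: a_def m_def)
  also have "\<dots> = C0 powr a * (avg w n powr b * (avg \<sigma> n powr (p - 1)) powr b)"
  proof -
    have "m powr a * (C0 / m) powr a = C0 powr a" using m_pos C0 by (simp add: powr_divide)
    moreover have "(avg \<sigma> n powr (p - 1)) powr b = avg \<sigma> n powr (p0 - 1)"
      unfolding b_def using p0 by (simp add: powr_powr)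
    ultimately show ?thesis by (simp add: ac_simps)
  qed
  also have "avg w n powr b * (avg \<sigma> n powr (p - 1)) powr b = Ap_char p w n powr b"
    unfolding Ap_char_def \<sigma>_def by (rule powr_mult[symmetric])
  finally show ?thesis unfolding a_def b_def .
qed

theorem lemma2p6:
  fixes p0 p :: real and w h :: "nat \<Rightarrow> real"
  assumes "1 < p0" "p0 < p"
    and "weight w" "in_Ap p w"
    and "in_lq w (p / (p - 1)) h"
    and "\<forall>k\<ge>1. h k > 0"
  shows "in_Ap p0 (\<lambda>k. w k * Nprime p w h k powr ((p - p0) / (p - 1)))
    \<and> Ap_const p0 (\<lambda>k. w k * Nprime p w h k powr ((p - p0) / (p - 1)))
      \<le> A1_const (\<lambda>k. Nprime p w h k * w k) powr ((p - p0) / (p - 1))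
         * Ap_const p w powr ((p0 - 1) / (p - 1))"
proof -
  interpret Rubio_de_Francia p w h using assms by unfold_locales auto
  define u where "u = (\<lambda>k. Nprime p w h k * w k)"
  have u_pos: "\<And>k. 1 \<le> k \<Longrightarrow> 0 < u k" unfolding u_def using Nprime_pos w_pos by simp
  have A1: "in_A1 u" unfolding u_def by (rule in_A1_Nprime_mult)
  show ?thesis unfolding u_def[symmetric]
  proof (rule in_Ap_and_Ap_const_le)
    fix n :: nat assume n: "1 \<le> n"
    have "Ap_char p0 (\<lambda>k. w k * Nprime p w h k powr ((p - p0) / (p - 1))) n
        \<le> A1_const u powr ((p - p0)/(p - 1)) * Ap_char p w n powr ((p0 - 1)/(p - 1))"
      using assms(1,2) n w_pos Nprime_pos A1_const_ge_1[OF A1 u_pos] avg_le_A1_const[OF A1 u_pos]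
      unfolding u_def by (intro Ap_char_factorization) auto
    also have "\<dots> \<le> A1_const u powr ((p - p0)/(p - 1)) * Ap_const p w powr ((p0 - 1)/(p - 1))"
      using Ap_char_le_Ap_const[OF Ap n] Ap_char_nonneg[of w p n] w_pos assms(1,2)
      by (intro mult_left_mono powr_mono2) (auto simp: less_imp_le)
    finally show "Ap_char p0 (\<lambda>k. w k * Nprime p w h k powr ((p - p0) / (p - 1))) n
        \<le> A1_const u powr ((p - p0)/(p - 1)) * Ap_const p w powr ((p0 - 1)/(p - 1))" .
  qed
qed

end
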